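(* Let $P$ be the distribution of a random graph on node set $\mathbb{N}$ with Möbius parameter $Z$. Then $P$ is exchangeable if and only if there is a unique Borel probability measure $\mu$ on $\hat{\mathcal{U}}$ such that for every finite labeled graph $F$ with node set contained in $\mathbb{N}$, \[Z(F)=\int_{\hat{\mathcal{U}}}\rho([F])\,\mathrm{d}\mu(\rho).\]
   Context: All graphs are simple. $\mathcal{L}_n$ is the set of labeled simple graphs with node set $[n]$, $\mathcal{L}_\infty$ the set of simple graphs with node set $\mathbb{N}$; a random graph is a random element $G$ of $\mathcal{L}_\infty$. $G[n]$ is the subgraph induced by $[n]$; for $H\in\mathcal{L}_n$ and a permutation $\sigma$ of $[n]$, $H_\sigma$ is the relabeled graph ($i\sim j$ in $H$ iff $\sigma(i)\sim\sigma(j)$ in $H_\sigma$). $P$ is exchangeable if $P(G[n]=H)=P(G[n]=H_\sigma)$ for all $n$, $H\in\mathcal{L}_n$, $\sigma$. The Möbius parameter is $Z(F)=P(F\subseteq G)$ for finite labeled graphs $F$ with node set in $\mathbb{N}$, where $F\subseteq G$ means all edges of $F$ are edges of $G$. $\mathcal{U}$ is the set of isomorphism classes $[F]$ of finite simple graphs (including the empty graph $\emptyset$), which is an Abelian semigroup under node-disjoint union $+$ with neutral element $\emptyset$. A character is a function $\rho:\mathcal{U}\to\mathbb{R}$ with $\rho(s+t)=\rho(s)\rho(t)$ and $\rho(\emptyset)=1$; $\hat{\mathcal{U}}$ is the set of bounded characters, equipped with the topology of pointwise convergence on $\mathcal{U}$ (and its Borel $\sigma$-algebra). *)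

theory Defs
  imports "HOL-Analysis.Analysis" "HOL-Probability.Probability"
begin

definition edges_on :: "nat set \<Rightarrow> nat set set" where
  "edges_on V = {e. \<exists>i j. i \<in> V \<and> j \<in> V \<and> i \<noteq> j \<and> e = {i, j}}"

definition Linf :: "nat set set set" where
  "Linf = {G. G \<subseteq> edges_on UNIV}"

definition Linf_M :: "nat set set measure" where
  "Linf_M = sigma Linf {{G \<in> Linf. e \<in> G} | e. e \<in> edges_on UNIV}"

definition Ln :: "nat \<Rightarrow> nat set set set" where
  "Ln n = {H. H \<subseteq> edges_on {0..<n}}"

definition induced :: "nat set set \<Rightarrow> nat \<Rightarrow> nat set set" where
  "induced G n = {e \<in> G. e \<subseteq> {0..<n}}"

definition relabel :: "(nat \<Rightarrow> nat) \<Rightarrow> nat set set \<Rightarrow> nat set set" where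
  "relabel \<sigma> H = (\<lambda>e. \<sigma> ` e) ` H"

definition exchangeable :: "nat set set measure \<Rightarrow> bool" where
  "exchangeable P \<longleftrightarrow>
     (\<forall>n. \<forall>H \<in> Ln n. \<forall>\<sigma>. \<sigma> permutes {0..<n} \<longrightarrow>
        prob_space.prob P {G \<in> space P. induced G n = H}
        = prob_space.prob P {G \<in> space P. induced G n = relabel \<sigma> H})"

definition fgraphs :: "(nat set \<times> nat set set) set" where
  "fgraphs = {(V, E). finite V \<and> E \<subseteq> edges_on V}"

definition mobius_param :: "nat set set measure \<Rightarrow> nat set \<times> nat set set \<Rightarrow> real" where
  "mobius_param P F = measure P {G \<in> space P. snd F \<subseteq> G}"

definition iso_rel :: "((nat set \<times> nat set set) \<times> (nat set \<times> nat set set)) set" where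
  "iso_rel = {((V, E), (V', E')). (V, E) \<in> fgraphs \<and> (V', E') \<in> fgraphs \<and>
      (\<exists>f. bij_betw f V V' \<and> E' = (\<lambda>e. f ` e) ` E)}"

definition Ucl :: "(nat set \<times> nat set set) set set" where
  "Ucl = fgraphs // iso_rel"

definition iso_class :: "nat set \<times> nat set set \<Rightarrow> (nat set \<times> nat set set) set" where
  "iso_class F = iso_rel `` {F}"

definition empty_class :: "(nat set \<times> nat set set) set" where
  "empty_class = iso_class ({}, {})"

definition uplus :: "(nat set \<times> nat set set) set \<Rightarrow> (nat set \<times> nat set set) set
                     \<Rightarrow> (nat set \<times> nat set set) set" where
  "uplus s t = (THE u. \<exists>F\<in>s. \<exists>H\<in>t. fst F \<inter> fst H = {} \<and>
                        u = iso_class (fst F \<union> fst H, snd F \<union> snd H))"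

definition is_character :: "((nat set \<times> nat set set) set \<Rightarrow> real) \<Rightarrow> bool" where
  "is_character \<rho> \<longleftrightarrow> \<rho> empty_class = 1 \<and>
     (\<forall>s\<in>Ucl. \<forall>t\<in>Ucl. \<rho> (uplus s t) = \<rho> s * \<rho> t)"

definition Uhat :: "((nat set \<times> nat set set) set \<Rightarrow> real) set" where
  "Uhat = {\<rho> \<in> Ucl \<rightarrow>\<^sub>E UNIV. is_character \<rho> \<and> (\<exists>B. \<forall>s\<in>Ucl. \<bar>\<rho> s\<bar> \<le> B)}"

definition Uhat_top :: "((nat set \<times> nat set set) set \<Rightarrow> real) topology" where
  "Uhat_top = subtopology (product_topology (\<lambda>_. euclideanreal) Ucl) Uhat"

definition borel_of :: "'a topology \<Rightarrow> 'a measure" where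
  "borel_of X = sigma (topspace X) {U. openin X U}"

end

theory Submission
  imports Defs
begin

type_synonym graph_class = "(nat set \<times> nat set set) set"

lemma edges_onD: "e \<in> edges_on V \<Longrightarrow> \<exists>i j. i \<in> V \<and> j \<in> V \<and> i \<noteq> j \<and> e = {i, j}"
  by (auto simp: edges_on_def)

lemma edges_on_subset: "e \<in> edges_on V \<Longrightarrow> e \<subseteq> V"
  by (auto simp: edges_on_def)

lemma Union_edges_on_subset: "E \<subseteq> edges_on V \<Longrightarrow> \<Union>E \<subseteq> V"
  using edges_on_subset by blast

lemma edges_on_mono: "V \<subseteq> W \<Longrightarrow> edges_on V \<subseteq> edges_on W"
  by (auto simp: edges_on_def)

lemma edges_on_iff: "e \<in> edges_on V \<longleftrightarrow> e \<in> edges_on UNIV \<and> e \<subseteq> V"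
  by (auto simp: edges_on_def)

lemma finite_edges_on: "finite V \<Longrightarrow> finite (edges_on V)"
  by (rule finite_subset[of _ "Pow V"]) (auto simp: edges_on_def)

lemma countable_edges_on: "countable (edges_on (UNIV :: nat set))"
  by (rule countable_subset[OF _ countable_Collect_finite]) (auto simp: edges_on_def)

lemma finite_Ln: "finite (Ln n)"
  unfolding Ln_def using finite_edges_on[of "{0..<n}"] by simp

lemma relabel_id: "relabel id E = E"
  by (simp add: relabel_def)

lemma relabel_comp: "relabel g (relabel f E) = relabel (g \<circ> f) E"
  by (auto simp: relabel_def image_comp)

lemma relabel_cong: "(\<And>x. x \<in> \<Union>E \<Longrightarrow> f x = g x) \<Longrightarrow> relabel f E = relabel g E"
  unfolding relabel_def by (rule image_cong) (auto intro!: image_cong)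

lemma relabel_Un: "relabel f (A \<union> B) = relabel f A \<union> relabel f B"
  by (auto simp: relabel_def)

lemma relabel_edges_on:
  assumes "E \<subseteq> edges_on V" "inj_on f V"
  shows "relabel f E \<subseteq> edges_on (f ` V)"
proof
  fix e' assume "e' \<in> relabel f E"
  then obtain e where e: "e \<in> E" "e' = f ` e" by (auto simp: relabel_def)
  then obtain i j where "i \<in> V" "j \<in> V" "i \<noteq> j" "e = {i, j}" using assms(1) edges_onD by blast
  moreover have "f i \<noteq> f j" using assms(2) \<open>i \<in> V\<close> \<open>j \<in> V\<close> \<open>i \<noteq> j\<close> by (auto dest: inj_onD)
  ultimately show "e' \<in> edges_on (f ` V)" using e by (auto simp: edges_on_def)
qed

lemma inj_image_fun: "inj f \<Longrightarrow> inj (\<lambda>e. f ` e)"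
  by (simp add: inj_image_eq_iff inj_def)

lemma inj_relabel: "inj f \<Longrightarrow> inj (relabel f)"
  unfolding relabel_def by (simp add: inj_image_fun inj_image_eq_iff inj_def)

lemma relabel_subset_iff: "inj f \<Longrightarrow> relabel f A \<subseteq> relabel f B \<longleftrightarrow> A \<subseteq> B"
  unfolding relabel_def by (simp add: inj_image_subset_iff inj_image_fun)

lemma relabel_in_Ln:
  assumes "\<sigma> permutes {0..<n}" "H \<in> Ln n"
  shows "relabel \<sigma> H \<in> Ln n"
  using relabel_edges_on[of H "{0..<n}" \<sigma>] assms permutes_inj_on[OF assms(1)] permutes_image[OF assms(1)]
  by (simp add: Ln_def)

lemma bij_betw_relabel_Ln:
  assumes "\<sigma> permutes {0..<n}"
  shows "bij_betw (relabel \<sigma>) (Ln n) (Ln n)"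
proof (rule bij_betw_byWitness[where f' = "relabel (inv \<sigma>)"])
  have "relabel (inv \<sigma>) (relabel \<sigma> H) = H" "relabel \<sigma> (relabel (inv \<sigma>) H) = H" for H
    using permutes_inv_o[OF assms] by (simp_all add: relabel_comp relabel_id)
  then show "\<forall>H\<in>Ln n. relabel (inv \<sigma>) (relabel \<sigma> H) = H" "\<forall>H\<in>Ln n. relabel \<sigma> (relabel (inv \<sigma>) H) = H"
    by auto
  show "relabel \<sigma> ` Ln n \<subseteq> Ln n" "relabel (inv \<sigma>) ` Ln n \<subseteq> Ln n"
    using relabel_in_Ln assms permutes_inv[OF assms] by auto
qed

lemma bij_betw_extend_permutes:
  fixes V W :: "nat set"
  assumes "V \<subseteq> {0..<n}" "W \<subseteq> {0..<n}" "bij_betw f V W"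
  obtains \<sigma> where "\<sigma> permutes {0..<n}" "\<And>x. x \<in> V \<Longrightarrow> \<sigma> x = f x"
proof -
  have "finite V" "finite W" using finite_subset[OF assms(1)] finite_subset[OF assms(2)] by auto
  moreover have "card V = card W" using assms(3) bij_betw_same_card by blast
  ultimately have "card ({0..<n} - V) = card ({0..<n} - W)"
    using assms by (simp add: card_Diff_subset)
  then obtain g where g: "bij_betw g ({0..<n} - V) ({0..<n} - W)"
    using finite_same_card_bij[of "{0..<n} - V" "{0..<n} - W"] by auto
  define \<sigma> where "\<sigma> x = (if x \<in> V then f x else if x \<in> {0..<n} then g x else x)" for x
  have "bij_betw \<sigma> V W" using assms(3) by (rule bij_betw_cong[THEN iffD1, rotated]) (simp add: \<sigma>_def)
  moreover have "bij_betw \<sigma> ({0..<n} - V) ({0..<n} - W)"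
    using g by (rule bij_betw_cong[THEN iffD1, rotated]) (simp add: \<sigma>_def)
  ultimately have "bij_betw \<sigma> (V \<union> ({0..<n} - V)) (W \<union> ({0..<n} - W))"
    by (rule bij_betw_combine) auto
  moreover have "V \<union> ({0..<n} - V) = {0..<n}" "W \<union> ({0..<n} - W) = {0..<n}" using assms by auto
  ultimately have "bij_betw \<sigma> {0..<n} {0..<n}" by simp
  then have "\<sigma> permutes {0..<n}" by (rule bij_imp_permutes) (use assms(1) in \<open>auto simp: \<sigma>_def\<close>)
  then show ?thesis by (rule that) (simp add: \<sigma>_def)
qed

lemma fgraphsI: "finite V \<Longrightarrow> E \<subseteq> edges_on V \<Longrightarrow> (V, E) \<in> fgraphs"
  by (simp add: fgraphs_def)

lemma fgraphsD: "(V, E) \<in> fgraphs \<Longrightarrow> finite V \<and> E \<subseteq> edges_on V"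
  by (simp add: fgraphs_def)

lemma finite_edges_fgraph: "(V, E) \<in> fgraphs \<Longrightarrow> finite E"
  using fgraphsD finite_edges_on finite_subset by metis

lemma fgraphs_Un: "(V, E) \<in> fgraphs \<Longrightarrow> (W, D) \<in> fgraphs \<Longrightarrow> (V \<union> W, E \<union> D) \<in> fgraphs"
  using edges_on_mono[of V "V \<union> W"] edges_on_mono[of W "V \<union> W"]
  by (auto simp: fgraphs_def)

lemma countable_fgraphs: "countable fgraphs"
proof (rule countable_subset)
  show "fgraphs \<subseteq> (\<Union>V\<in>{V::nat set. finite V}. {V} \<times> Pow (edges_on V))"
    by (auto simp: fgraphs_def)
  show "countable (\<Union>V\<in>{V::nat set. finite V}. {V} \<times> Pow (edges_on V))"
    by (intro countable_UN countable_Collect_finite countable_finite) (auto simp: finite_edges_on)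
qed

lemma iso_relI:
  "(V, E) \<in> fgraphs \<Longrightarrow> (V', E') \<in> fgraphs \<Longrightarrow> bij_betw f V V' \<Longrightarrow> E' = relabel f E
    \<Longrightarrow> ((V, E), (V', E')) \<in> iso_rel"
  by (auto simp: iso_rel_def relabel_def)

lemma iso_relE:
  assumes "((V, E), (V', E')) \<in> iso_rel"
  obtains f where "(V, E) \<in> fgraphs" "(V', E') \<in> fgraphs" "bij_betw f V V'" "E' = relabel f E"
  using assms by (auto simp: iso_rel_def relabel_def)

lemma iso_rel_fgraphs: "iso_rel \<subseteq> fgraphs \<times> fgraphs"
  by (auto simp: iso_rel_def)

lemma iso_rel_inj_image:
  assumes "(V, E) \<in> fgraphs" "inj_on f V"
  shows "((V, E), (f ` V, relabel f E)) \<in> iso_rel"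
  using assms fgraphsD[OF assms(1)] relabel_edges_on[of E V f]
  by (intro iso_relI[where f = f] fgraphsI) (auto simp: bij_betw_def)

lemma iso_rel_refl: "F \<in> fgraphs \<Longrightarrow> (F, F) \<in> iso_rel"
  using iso_rel_inj_image[of _ _ id] by (cases F) (simp add: relabel_id)

lemma iso_rel_sym:
  assumes "((V, E), (V', E')) \<in> iso_rel"
  shows "((V', E'), (V, E)) \<in> iso_rel"
proof -
  obtain f where f: "(V, E) \<in> fgraphs" "(V', E') \<in> fgraphs" "bij_betw f V V'" "E' = relabel f E"
    using assms by (rule iso_relE)
  define g where "g = the_inv_into V f"
  have "relabel g E' = relabel (g \<circ> f) E" by (simp add: f(4) relabel_comp)
  also have "\<dots> = relabel id E"
    using f(3) Union_edges_on_subset[of E V] fgraphsD[OF f(1)]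
    by (intro relabel_cong) (auto simp: g_def the_inv_into_f_f bij_betw_def)
  finally show ?thesis
    using f bij_betw_the_inv_into[OF f(3)] by (intro iso_relI) (auto simp: relabel_id g_def)
qed

lemma iso_rel_trans:
  assumes "(F, F') \<in> iso_rel" "(F', F'') \<in> iso_rel"
  shows "(F, F'') \<in> iso_rel"
proof -
  obtain V E V' E' V'' E'' where FF: "F = (V, E)" "F' = (V', E')" "F'' = (V'', E'')"
    by (cases F, cases F', cases F'')
  obtain f where f: "(V, E) \<in> fgraphs" "bij_betw f V V'" "E' = relabel f E"
    using assms(1)[unfolded FF] by (rule iso_relE)
  obtain g where g: "(V'', E'') \<in> fgraphs" "bij_betw g V' V''" "E'' = relabel g E'"
    using assms(2)[unfolded FF] by (rule iso_relE)
  show ?thesis unfolding FF using f g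
    by (intro iso_relI[where f = "g \<circ> f"]) (auto intro: bij_betw_trans simp: relabel_comp)
qed

lemma equiv_iso_rel: "equiv fgraphs iso_rel"
  unfolding equiv_def refl_on_def sym_def trans_def
  using iso_rel_fgraphs iso_rel_refl iso_rel_sym iso_rel_trans by fast

lemma iso_rel_Un:
  assumes "((V1, E1), (V2, E2)) \<in> iso_rel" "((W1, D1), (W2, D2)) \<in> iso_rel"
    and "V1 \<inter> W1 = {}" "V2 \<inter> W2 = {}"
  shows "((V1 \<union> W1, E1 \<union> D1), (V2 \<union> W2, E2 \<union> D2)) \<in> iso_rel"
proof -
  obtain f where f: "(V1, E1) \<in> fgraphs" "(V2, E2) \<in> fgraphs" "bij_betw f V1 V2" "E2 = relabel f E1"
    using assms(1) by (rule iso_relE)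
  obtain g where g: "(W1, D1) \<in> fgraphs" "(W2, D2) \<in> fgraphs" "bij_betw g W1 W2" "D2 = relabel g D1"
    using assms(2) by (rule iso_relE)
  define h where "h x = (if x \<in> V1 then f x else g x)" for x
  have "bij_betw h V1 V2" using f(3) by (rule bij_betw_cong[THEN iffD1, rotated]) (simp add: h_def)
  moreover have "bij_betw h W1 W2" using g(3)
    by (rule bij_betw_cong[THEN iffD1, rotated]) (use assms(3) in \<open>auto simp: h_def\<close>)
  ultimately have h: "bij_betw h (V1 \<union> W1) (V2 \<union> W2)" using assms(4) by (rule bij_betw_combine)
  have "relabel h E1 = relabel f E1"
    using Union_edges_on_subset[of E1 V1] fgraphsD[OF f(1)] by (intro relabel_cong) (auto simp: h_def)
  moreover have "relabel h D1 = relabel g D1"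
    using Union_edges_on_subset[of D1 W1] fgraphsD[OF g(1)] assms(3) by (intro relabel_cong) (auto simp: h_def)
  ultimately show ?thesis
    using f g h by (intro iso_relI[where f = h] fgraphs_Un) (auto simp: relabel_Un)
qed

lemma iso_class_self: "F \<in> fgraphs \<Longrightarrow> F \<in> iso_class F"
  by (simp add: iso_class_def iso_rel_refl)

lemma mem_iso_class: "F' \<in> iso_class F \<longleftrightarrow> (F, F') \<in> iso_rel"
  by (simp add: iso_class_def)

lemma iso_class_eq: "(F, F') \<in> iso_rel \<Longrightarrow> iso_class F = iso_class F'"
  unfolding iso_class_def using equiv_iso_rel equiv_class_eq by metis

lemma iso_class_eq_iff:
  "F \<in> fgraphs \<Longrightarrow> F' \<in> fgraphs \<Longrightarrow> iso_class F = iso_class F' \<longleftrightarrow> (F, F') \<in> iso_rel"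
  unfolding iso_class_def using equiv_iso_rel eq_equiv_class_iff by metis

lemma Ucl_eq_image: "Ucl = iso_class ` fgraphs"
  by (auto simp: Ucl_def quotient_def iso_class_def)

lemma iso_class_in_Ucl: "F \<in> fgraphs \<Longrightarrow> iso_class F \<in> Ucl"
  by (simp add: Ucl_eq_image)

lemma UclE:
  assumes "s \<in> Ucl"
  obtains F where "F \<in> fgraphs" "s = iso_class F"
  using assms by (auto simp: Ucl_eq_image)

lemma countable_Ucl: "countable Ucl"
  unfolding Ucl_eq_image using countable_fgraphs by simp

lemma empty_class_in_Ucl: "empty_class \<in> Ucl"
  unfolding empty_class_def by (rule iso_class_in_Ucl) (simp add: fgraphs_def)

lemma obtain_disjoint_copy:
  assumes "F \<in> fgraphs" "finite A"
  obtains F' where "(F, F') \<in> iso_rel" "fst F' \<inter> A = {}"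
proof -
  obtain V E where F: "F = (V, E)" by (cases F)
  obtain k where "A \<subseteq> {..<k}" using assms(2) finite_nat_bounded by blast
  then have "(+) k ` V \<inter> A = {}" by auto
  moreover have "(F, ((+) k ` V, relabel ((+) k) E)) \<in> iso_rel"
    using iso_rel_inj_image assms(1) F by simp
  ultimately show ?thesis using that by auto
qed

lemma uplus_iso_class:
  assumes "F \<in> fgraphs" "H \<in> fgraphs" "fst F \<inter> fst H = {}"
  shows "uplus (iso_class F) (iso_class H) = iso_class (fst F \<union> fst H, snd F \<union> snd H)"
  unfolding uplus_def
proof (rule the_equality)
  show "\<exists>F'\<in>iso_class F. \<exists>H'\<in>iso_class H. fst F' \<inter> fst H' = {} \<and>
          iso_class (fst F \<union> fst H, snd F \<union> snd H) = iso_class (fst F' \<union> fst H', snd F' \<union> snd H')"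
  proof (intro bexI conjI)
    show "F \<in> iso_class F" "H \<in> iso_class H" using assms by (auto intro: iso_class_self)
  qed (use assms in auto)
next
  fix u assume "\<exists>F'\<in>iso_class F. \<exists>H'\<in>iso_class H. fst F' \<inter> fst H' = {} \<and>
          u = iso_class (fst F' \<union> fst H', snd F' \<union> snd H')"
  then obtain F' H' where FH: "(F, F') \<in> iso_rel" "(H, H') \<in> iso_rel" "fst F' \<inter> fst H' = {}"
     "u = iso_class (fst F' \<union> fst H', snd F' \<union> snd H')" by (auto simp: mem_iso_class)
  have "((fst F \<union> fst H, snd F \<union> snd H), (fst F' \<union> fst H', snd F' \<union> snd H')) \<in> iso_rel"
    using FH assms(3) by (intro iso_rel_Un) auto
  then show "u = iso_class (fst F \<union> fst H, snd F \<union> snd H)" using FH(4) iso_class_eq by metis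
qed

lemma Ucl_disjoint_representatives:
  assumes "s \<in> Ucl" "t \<in> Ucl"
  obtains V E W D where "(V, E) \<in> fgraphs" "(W, D) \<in> fgraphs" "V \<inter> W = {}"
    "s = iso_class (V, E)" "t = iso_class (W, D)"
proof -
  obtain F where F: "F \<in> fgraphs" "s = iso_class F" using assms(1) by (rule UclE)
  obtain V E where VE: "F = (V, E)" by fastforce
  obtain H0 where H0: "H0 \<in> fgraphs" "t = iso_class H0" using assms(2) by (rule UclE)
  have "finite V" using F(1) fgraphsD VE by blast
  then obtain H where H: "(H0, H) \<in> iso_rel" "fst H \<inter> V = {}"
    using obtain_disjoint_copy[OF H0(1)] by blast
  obtain W D where WD: "H = (W, D)" by fastforce
  show ?thesis
  proof (rule that)
    show "(V, E) \<in> fgraphs" "s = iso_class (V, E)" using F VE by simp_all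
    show "(W, D) \<in> fgraphs" using H(1) iso_rel_fgraphs WD by blast
    show "t = iso_class (W, D)" using H(1) H0(2) iso_class_eq WD by simp
    show "V \<inter> W = {}" using H(2) WD by auto
  qed
qed

lemma uplus_in_Ucl:
  assumes "s \<in> Ucl" "t \<in> Ucl"
  shows "uplus s t \<in> Ucl"
proof -
  obtain V E W D where "(V, E) \<in> fgraphs" "(W, D) \<in> fgraphs" "V \<inter> W = {}"
    "s = iso_class (V, E)" "t = iso_class (W, D)"
    using assms by (rule Ucl_disjoint_representatives)
  then show ?thesis using uplus_iso_class[of "(V, E)" "(W, D)"] iso_class_in_Ucl fgraphs_Un by simp
qed

lemma bij_betw_relabel_Ln_Collect:
  assumes \<sigma>: "\<sigma> permutes {0..<n}" and QR: "\<And>H. H \<in> Ln n \<Longrightarrow> Q (relabel \<sigma> H) \<longleftrightarrow> R H"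
  shows "bij_betw (relabel \<sigma>) {H \<in> Ln n. R H} {H \<in> Ln n. Q H}"
proof -
  have bij: "bij_betw (relabel \<sigma>) (Ln n) (Ln n)" using \<sigma> by (rule bij_betw_relabel_Ln)
  have "relabel \<sigma> ` {H \<in> Ln n. R H} = {H \<in> Ln n. Q H}"
  proof safe
    fix H assume "H \<in> Ln n" "Q H"
    then obtain H' where "H' \<in> Ln n" "H = relabel \<sigma> H'" using bij by (auto simp: bij_betw_def)
    then show "H \<in> relabel \<sigma> ` {H \<in> Ln n. R H}" using QR \<open>Q H\<close> by auto
  qed (use bij QR in \<open>auto simp: bij_betw_def\<close>)
  moreover have "inj_on (relabel \<sigma>) {H \<in> Ln n. R H}"
    using bij by (auto simp: bij_betw_def inj_on_def)
  ultimately show ?thesis by (simp add: bij_betw_def)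
qed

locale random_graph =
  fixes P :: "nat set set measure"
  assumes prob_space_P: "prob_space P" and sets_P: "sets P = sets Linf_M"
begin

sublocale prob_space P by (rule prob_space_P)

definition contain_prob :: "nat set set \<Rightarrow> real" where
  "contain_prob E = measure P {G \<in> space P. E \<subseteq> G}"

definition induced_prob :: "nat \<Rightarrow> nat set set \<Rightarrow> real" where
  "induced_prob n H = measure P {G \<in> space P. induced G n = H}"

lemma mobius_param_eq: "mobius_param P F = contain_prob (snd F)"
  by (simp add: mobius_param_def contain_prob_def)

lemma contain_prob_nonneg: "0 \<le> contain_prob E"
  by (simp add: contain_prob_def)

lemma contain_prob_le_1: "contain_prob E \<le> 1"
  by (simp add: contain_prob_def)

lemma space_P: "space P = Linf"
proof -
  have "space P = space Linf_M" using sets_P by (rule sets_eq_imp_space_eq)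
  then show ?thesis by (auto simp: Linf_M_def space_measure_of_conv)
qed

lemma sets_edge_event: "e \<in> edges_on UNIV \<Longrightarrow> {G \<in> space P. e \<in> G} \<in> sets P"
  unfolding sets_P space_P Linf_M_def
  by (auto simp: sets_measure_of_conv intro: sigma_sets.Basic)

lemma sets_edges_pattern:
  assumes "S \<subseteq> edges_on UNIV"
  shows "{G \<in> space P. \<forall>e\<in>S. e \<in> G \<longleftrightarrow> e \<in> K} \<in> sets P"
proof -
  have "{G \<in> space P. e \<in> G \<longleftrightarrow> e \<in> K} \<in> sets P" if "e \<in> S" for e
  proof -
    have "{G \<in> space P. e \<in> G} \<in> sets P" using assms that sets_edge_event by blast
    moreover from this have "{G \<in> space P. \<not> e \<in> G} \<in> sets P" by (rule sets.sets_Collect_neg)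
    ultimately show ?thesis by (cases "e \<in> K") simp_all
  qed
  moreover have "countable S" using assms countable_edges_on countable_subset by blast
  ultimately show ?thesis by (rule sets.sets_Collect_countable_All')
qed


lemma sets_contains:
  assumes "E \<subseteq> edges_on UNIV"
  shows "{G \<in> space P. E \<subseteq> G} \<in> sets P"
proof -
  have "{G \<in> space P. \<forall>e\<in>E. e \<in> G} \<in> sets P"
    using countable_subset[OF assms countable_edges_on] assms sets_edge_event
    by (intro sets.sets_Collect_countable_All') auto
  then show ?thesis by (simp only: subset_eq)
qed


lemma induced_eq_Int: "G \<in> Linf \<Longrightarrow> induced G n = G \<inter> edges_on {0..<n}"
  unfolding induced_def Linf_def using edges_on_iff[of _ "{0..<n}"] by blast

lemma sets_induced_eq:
  assumes "H \<in> Ln n"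
  shows "{G \<in> space P. induced G n = H} \<in> sets P"
proof -
  have "{G \<in> space P. \<forall>e\<in>edges_on {0..<n}. e \<in> G \<longleftrightarrow> e \<in> H} \<in> sets P"
    by (rule sets_edges_pattern[OF edges_on_mono]) simp
  moreover have "{G \<in> space P. induced G n = H} = {G \<in> space P. \<forall>e\<in>edges_on {0..<n}. e \<in> G \<longleftrightarrow> e \<in> H}"
    using assms by (auto simp: space_P induced_eq_Int Ln_def)
  ultimately show ?thesis by simp
qed

lemma contain_prob_eq_sum_induced_prob:
  assumes "E \<in> Ln n"
  shows "contain_prob E = (\<Sum>H \<in> {H \<in> Ln n. E \<subseteq> H}. induced_prob n H)"
proof -
  have "{G \<in> space P. E \<subseteq> G} = (\<Union>H \<in> {H \<in> Ln n. E \<subseteq> H}. {G \<in> space P. induced G n = H})"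
  proof safe
    fix G assume G: "G \<in> space P" "E \<subseteq> G"
    then have "E \<subseteq> induced G n" using assms by (auto simp: space_P induced_eq_Int Ln_def)
    moreover have "induced G n \<in> Ln n" using G(1) by (auto simp: space_P induced_eq_Int Ln_def)
    ultimately show "G \<in> (\<Union>H \<in> {H \<in> Ln n. E \<subseteq> H}. {G \<in> space P. induced G n = H})"
      using G(1) by blast
  qed (auto simp: induced_def)
  then have "contain_prob E = measure P (\<Union>H \<in> {H \<in> Ln n. E \<subseteq> H}. {G \<in> space P. induced G n = H})"
    by (simp add: contain_prob_def)
  also have "\<dots> = (\<Sum>H \<in> {H \<in> Ln n. E \<subseteq> H}. induced_prob n H)" unfolding induced_prob_def
    by (rule measure_finite_Union) (auto simp: finite_Ln sets_induced_eq disjoint_family_on_def)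
  finally show ?thesis .
qed

lemma induced_prob_eq_diff:
  assumes "H \<in> Ln n"
  shows "induced_prob n H = contain_prob H - (\<Sum>H' \<in> {H' \<in> Ln n. H \<subset> H'}. induced_prob n H')"
proof -
  have "{H' \<in> Ln n. H \<subseteq> H'} = insert H {H' \<in> Ln n. H \<subset> H'}" using assms by auto
  then show ?thesis using contain_prob_eq_sum_induced_prob[OF assms] finite_Ln by simp
qed

lemma exchangeable_iff_induced_prob:
  "exchangeable P \<longleftrightarrow>
     (\<forall>n \<sigma> H. \<sigma> permutes {0..<n} \<longrightarrow> H \<in> Ln n \<longrightarrow> induced_prob n (relabel \<sigma> H) = induced_prob n H)"
  by (auto simp: exchangeable_def induced_prob_def)

lemma contain_prob_relabel_if_exchangeable:
  assumes "exchangeable P" "\<sigma> permutes {0..<n}" "E \<in> Ln n"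
  shows "contain_prob (relabel \<sigma> E) = contain_prob E"
proof -
  have bij: "bij_betw (relabel \<sigma>) {H \<in> Ln n. E \<subseteq> H} {H \<in> Ln n. relabel \<sigma> E \<subseteq> H}"
    using assms(2) permutes_inj[OF assms(2)]
    by (intro bij_betw_relabel_Ln_Collect) (simp_all add: relabel_subset_iff)
  have "contain_prob (relabel \<sigma> E) = (\<Sum>H \<in> {H \<in> Ln n. relabel \<sigma> E \<subseteq> H}. induced_prob n H)"
    using assms relabel_in_Ln contain_prob_eq_sum_induced_prob by blast
  also have "\<dots> = (\<Sum>H \<in> {H \<in> Ln n. E \<subseteq> H}. induced_prob n (relabel \<sigma> H))"
    by (rule sum.reindex_bij_betw[OF bij, symmetric])
  also have "\<dots> = (\<Sum>H \<in> {H \<in> Ln n. E \<subseteq> H}. induced_prob n H)"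
    using assms(1,2) by (simp add: exchangeable_iff_induced_prob)
  also have "\<dots> = contain_prob E" using contain_prob_eq_sum_induced_prob assms(3) by simp
  finally show ?thesis .
qed

lemma relabel_psubset_iff: "inj f \<Longrightarrow> relabel f A \<subset> relabel f B \<longleftrightarrow> A \<subset> B"
  unfolding less_le_not_le using relabel_subset_iff[of f A B] relabel_subset_iff[of f B A] by blast

lemma exchangeable_if_contain_prob_relabel:
  assumes relabel_inv: "\<And>n \<sigma> E. \<sigma> permutes {0..<n} \<Longrightarrow> E \<in> Ln n \<Longrightarrow> contain_prob (relabel \<sigma> E) = contain_prob E"
  shows "exchangeable P"
  unfolding exchangeable_iff_induced_prob
proof (intro allI impI)
  fix n \<sigma> H assume \<sigma>: "\<sigma> permutes {0..<n}" and H: "H \<in> Ln n"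
  define k where "k = card (edges_on {0..<n} - H)"
  from H k_def show "induced_prob n (relabel \<sigma> H) = induced_prob n H"
  proof (induction k arbitrary: H rule: less_induct)
    case (less k)
    have IH: "induced_prob n (relabel \<sigma> H') = induced_prob n H'" if "H' \<in> Ln n" "H \<subset> H'" for H'
    proof (rule less.IH[OF _ that(1) refl])
      have "edges_on {0..<n} - H' \<subset> edges_on {0..<n} - H" using that by (auto simp: Ln_def)
      then show "card (edges_on {0..<n} - H') < k"
        unfolding less.prems(2) using finite_edges_on[of "{0..<n}"] by (simp add: psubset_card_mono)
    qed
    have bij: "bij_betw (relabel \<sigma>) {H' \<in> Ln n. H \<subset> H'} {H' \<in> Ln n. relabel \<sigma> H \<subset> H'}"
      by (rule bij_betw_relabel_Ln_Collect[OF \<sigma>]) (rule relabel_psubset_iff[OF permutes_inj[OF \<sigma>]])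
    have "induced_prob n (relabel \<sigma> H)
        = contain_prob (relabel \<sigma> H) - (\<Sum>H' \<in> {H' \<in> Ln n. relabel \<sigma> H \<subset> H'}. induced_prob n H')"
      by (rule induced_prob_eq_diff[OF relabel_in_Ln[OF \<sigma> less.prems(1)]])
    also have "\<dots> = contain_prob H - (\<Sum>H' \<in> {H' \<in> Ln n. H \<subset> H'}. induced_prob n (relabel \<sigma> H'))"
      using relabel_inv[OF \<sigma> less.prems(1)] sum.reindex_bij_betw[OF bij, of "induced_prob n"] by simp
    also have "\<dots> = contain_prob H - (\<Sum>H' \<in> {H' \<in> Ln n. H \<subset> H'}. induced_prob n H')"
      using IH by (intro arg_cong[where f = "\<lambda>x. contain_prob H - x"] sum.cong) auto
    also have "\<dots> = induced_prob n H" by (rule induced_prob_eq_diff[OF less.prems(1), symmetric])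
    finally show ?case .
  qed
qed

lemma exchangeable_iff_contain_prob_relabel:
  "exchangeable P \<longleftrightarrow>
     (\<forall>n \<sigma> E. \<sigma> permutes {0..<n} \<longrightarrow> E \<in> Ln n \<longrightarrow> contain_prob (relabel \<sigma> E) = contain_prob E)"
  using contain_prob_relabel_if_exchangeable exchangeable_if_contain_prob_relabel by blast

lemma contain_prob_iso:
  assumes "exchangeable P" "((V, E), (V', E')) \<in> iso_rel"
  shows "contain_prob E = contain_prob E'"
proof -
  obtain f where f: "(V, E) \<in> fgraphs" "(V', E') \<in> fgraphs" "bij_betw f V V'" "E' = relabel f E"
    by (rule iso_relE[OF assms(2)])
  obtain n where "V \<union> V' \<subseteq> {..<n}" using f(1,2) fgraphsD finite_nat_bounded by (meson finite_UnI)
  then have n: "V \<subseteq> {0..<n}" "V' \<subseteq> {0..<n}" by auto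
  obtain \<sigma> where \<sigma>: "\<sigma> permutes {0..<n}" "\<And>x. x \<in> V \<Longrightarrow> \<sigma> x = f x"
    using bij_betw_extend_permutes[OF n f(3)] by blast
  have E': "relabel \<sigma> E = E'"
    unfolding f(4) using \<sigma>(2) Union_edges_on_subset[of E V] fgraphsD[OF f(1)] by (intro relabel_cong) blast
  have "E \<in> Ln n" using fgraphsD[OF f(1)] edges_on_mono[OF n(1)] by (auto simp: Ln_def)
  from contain_prob_relabel_if_exchangeable[OF assms(1) \<sigma>(1) this] show ?thesis
    unfolding E' by (rule sym)
qed

end

definition injections :: "nat set \<Rightarrow> nat \<Rightarrow> (nat \<Rightarrow> nat) set" where
  "injections V n = {\<phi> \<in> V \<rightarrow>\<^sub>E {0..<n}. inj_on \<phi> V}"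

definition copy_density :: "nat \<Rightarrow> nat set \<times> nat set set \<Rightarrow> nat set set \<Rightarrow> real" where
  "copy_density n F G =
     (\<Sum>\<phi> \<in> injections (fst F) n. of_bool (relabel \<phi> (snd F) \<subseteq> G)) / card (injections (fst F) n)"

lemma finite_injections: "finite V \<Longrightarrow> finite (injections V n)"
  unfolding injections_def by (rule finite_subset[of _ "V \<rightarrow>\<^sub>E {0..<n}"]) (auto intro: finite_PiE)

lemma injections_less: "\<psi> \<in> injections W n \<Longrightarrow> w \<in> W \<Longrightarrow> \<psi> w < n"
  by (auto simp: injections_def PiE_def Pi_def)

lemma injections_nonempty:
  assumes "finite V" "card V \<le> n"
  shows "injections V n \<noteq> {}"
proof -
  obtain f where "f ` V \<subseteq> {0..<n}" "inj_on f V"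
    using card_le_inj[of V "{0..<n}"] assms by auto
  then have "restrict f V \<in> injections V n" by (auto simp: injections_def inj_on_def)
  then show ?thesis by blast
qed

lemma copy_density_nonneg: "0 \<le> copy_density n F G"
  unfolding copy_density_def by (intro divide_nonneg_nonneg sum_nonneg) auto

lemma copy_density_le_1: "copy_density n F G \<le> 1"
proof -
  have "(\<Sum>\<phi> \<in> injections (fst F) n. of_bool (relabel \<phi> (snd F) \<subseteq> G)) \<le> real (card (injections (fst F) n))"
    using sum_mono[of _ "\<lambda>\<phi>. of_bool (relabel \<phi> (snd F) \<subseteq> G)" "\<lambda>_. 1 :: real"] by simp
  then show ?thesis unfolding copy_density_def
    by (cases "card (injections (fst F) n) = 0") (auto simp: divide_le_eq_1)
qed

lemma copy_density_empty: "copy_density n ({}, {}) G = 1"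
proof -
  have "injections {} n = {\<lambda>_. undefined}" by (auto simp: injections_def)
  then show ?thesis by (simp add: copy_density_def relabel_def)
qed

lemma bij_betw_injections_compose:
  assumes f: "bij_betw f V V'"
  shows "bij_betw (\<lambda>\<psi>. restrict (\<psi> \<circ> f) V) (injections V' n) (injections V n)"
proof (rule bij_betw_byWitness[where f' = "\<lambda>\<phi>. restrict (\<phi> \<circ> the_inv_into V f) V'"])
  define g where "g = the_inv_into V f"
  have g: "bij_betw g V' V" using f by (simp add: g_def bij_betw_the_inv_into)
  have gf: "g (f x) = x" if "x \<in> V" for x
    using f that by (simp add: g_def the_inv_into_f_f bij_betw_def)
  have fg: "f (g y) = y" if "y \<in> V'" for y
    using f that by (simp add: g_def f_the_inv_into_f_bij_betw)
  have fV: "f x \<in> V'" if "x \<in> V" for x using f that by (auto simp: bij_betw_def)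
  have gV: "g y \<in> V" if "y \<in> V'" for y using g that by (auto simp: bij_betw_def)
  show "\<forall>\<psi> \<in> injections V' n. restrict (restrict (\<psi> \<circ> f) V \<circ> g) V' = \<psi>"
    using gV fg by (auto simp: injections_def PiE_def extensional_def fun_eq_iff)
  show "\<forall>\<phi> \<in> injections V n. restrict (restrict (\<phi> \<circ> g) V' \<circ> f) V = \<phi>"
    using fV gf by (auto simp: injections_def PiE_def extensional_def fun_eq_iff)
  show "(\<lambda>\<psi>. restrict (\<psi> \<circ> f) V) ` injections V' n \<subseteq> injections V n"
    using fV f by (auto simp: injections_def inj_on_def bij_betw_def)
  show "(\<lambda>\<phi>. restrict (\<phi> \<circ> g) V') ` injections V n \<subseteq> injections V' n"
    using gV g by (auto simp: injections_def inj_on_def bij_betw_def)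
qed

lemma copy_density_iso:
  assumes "(F, F') \<in> iso_rel"
  shows "copy_density n F G = copy_density n F' G"
proof -
  obtain V E V' E' where FF: "F = (V, E)" "F' = (V', E')" by fastforce
  obtain f where f: "(V, E) \<in> fgraphs" "bij_betw f V V'" "E' = relabel f E"
    by (rule iso_relE[OF assms[unfolded FF]])
  note bij = bij_betw_injections_compose[OF f(2), of n]
  have "relabel (restrict (\<psi> \<circ> f) V) E = relabel \<psi> E'" for \<psi>
  proof -
    have "relabel (restrict (\<psi> \<circ> f) V) E = relabel (\<psi> \<circ> f) E"
      using Union_edges_on_subset[of E V] fgraphsD[OF f(1)] by (intro relabel_cong) auto
    then show ?thesis by (simp add: f(3) relabel_comp)
  qed
  then have "(\<Sum>\<phi> \<in> injections V n. of_bool (relabel \<phi> E \<subseteq> G))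
      = (\<Sum>\<psi> \<in> injections V' n. of_bool (relabel \<psi> E' \<subseteq> G) :: real)"
    using sum.reindex_bij_betw[OF bij, of "\<lambda>\<phi>. of_bool (relabel \<phi> E \<subseteq> G) :: real"] by simp
  moreover have "card (injections V n) = card (injections V' n)"
    using bij bij_betw_same_card by metis
  ultimately show ?thesis unfolding FF copy_density_def by simp
qed

lemma card_injections_fiber_eq:
  assumes "w \<in> W" "a < n" "b < n"
  shows "card {\<psi> \<in> injections W n. \<psi> w = a} = card {\<psi> \<in> injections W n. \<psi> w = b}"
proof -
  define \<tau> where "\<tau> x = (if x = a then b else if x = b then a else x)" for x :: nat
  have \<tau>\<tau>: "\<tau> (\<tau> x) = x" for x by (simp add: \<tau>_def)
  have "inj \<tau>" by (metis \<tau>\<tau> injI)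
  define R where "R \<psi> = restrict (\<tau> \<circ> \<psi>) W" for \<psi> :: "nat \<Rightarrow> nat"
  have RI: "R \<psi> \<in> injections W n" if "\<psi> \<in> injections W n" for \<psi>
  proof -
    have "R \<psi> \<in> W \<rightarrow>\<^sub>E {0..<n}" using that assms by (auto simp: R_def \<tau>_def injections_less)
    moreover have "inj_on (R \<psi>) W" using that \<open>inj \<tau>\<close> unfolding R_def inj_on_def injections_def
      by (auto dest: injD)
    ultimately show ?thesis by (simp add: injections_def)
  qed
  have RR: "R (R \<psi>) = \<psi>" if "\<psi> \<in> injections W n" for \<psi>
    using that by (auto simp: R_def \<tau>\<tau> injections_def PiE_def extensional_def fun_eq_iff)
  have "bij_betw R {\<psi> \<in> injections W n. \<psi> w = a} {\<psi> \<in> injections W n. \<psi> w = b}"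
    by (rule bij_betw_byWitness[where f' = R]) (use RR RI assms(1) in \<open>auto simp: R_def \<tau>_def\<close>)
  then show ?thesis by (rule bij_betw_same_card)
qed

lemma card_injections_fiber_le:
  assumes "finite W" "w \<in> W"
  shows "real (card {\<psi> \<in> injections W n. \<psi> w = a}) * n \<le> card (injections W n)"
proof (cases "a < n")
  case True
  have "injections W n = (\<Union>b \<in> {0..<n}. {\<psi> \<in> injections W n. \<psi> w = b})"
    using injections_less assms(2) by auto
  then have "card (injections W n) = card (\<Union>b \<in> {0..<n}. {\<psi> \<in> injections W n. \<psi> w = b})"
    by (rule arg_cong)
  also have "\<dots> = (\<Sum>b \<in> {0..<n}. card {\<psi> \<in> injections W n. \<psi> w = b})"
    by (rule card_UN_disjoint) (auto simp: finite_injections[OF assms(1)])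
  also have "\<dots> = (\<Sum>b \<in> {0..<n}. card {\<psi> \<in> injections W n. \<psi> w = a})"
    using card_injections_fiber_eq[OF assms(2) True] by (intro sum.cong) auto
  finally show ?thesis by simp
next
  case False
  then have "{\<psi> \<in> injections W n. \<psi> w = a} = {}" using injections_less assms(2) by force
  then show ?thesis by (metis card.empty of_nat_0 mult_zero_left of_nat_0_le_iff)
qed

lemma card_injections_meeting_le:
  assumes "finite W" "finite A"
  shows "real (card {\<psi> \<in> injections W n. \<psi> ` W \<inter> A \<noteq> {}}) * n
    \<le> card A * card W * card (injections W n)"
proof -
  have sub: "{\<psi> \<in> injections W n. \<psi> ` W \<inter> A \<noteq> {}}
      \<subseteq> (\<Union>p \<in> W \<times> A. {\<psi> \<in> injections W n. \<psi> (fst p) = snd p})"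
    by auto
  have "card {\<psi> \<in> injections W n. \<psi> ` W \<inter> A \<noteq> {}}
      \<le> card (\<Union>p \<in> W \<times> A. {\<psi> \<in> injections W n. \<psi> (fst p) = snd p})"
    using sub by (intro card_mono) (rule finite_subset[of _ "injections W n"], auto simp: finite_injections[OF assms(1)])
  also have "\<dots> \<le> (\<Sum>p \<in> W \<times> A. card {\<psi> \<in> injections W n. \<psi> (fst p) = snd p})"
    by (rule card_UN_le) (use assms in auto)
  finally have "real (card {\<psi> \<in> injections W n. \<psi> ` W \<inter> A \<noteq> {}})
      \<le> real (\<Sum>p \<in> W \<times> A. card {\<psi> \<in> injections W n. \<psi> (fst p) = snd p})"
    by (simp only: of_nat_le_iff)
  then have "real (card {\<psi> \<in> injections W n. \<psi> ` W \<inter> A \<noteq> {}}) * n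
      \<le> real (\<Sum>p \<in> W \<times> A. card {\<psi> \<in> injections W n. \<psi> (fst p) = snd p}) * n"
    by (rule mult_right_mono) simp
  also have "\<dots> = (\<Sum>p \<in> W \<times> A. real (card {\<psi> \<in> injections W n. \<psi> (fst p) = snd p}) * n)"
    by (simp add: sum_distrib_right)
  also have "\<dots> \<le> (\<Sum>p \<in> W \<times> A. real (card (injections W n)))"
    using card_injections_fiber_le[OF assms(1)] by (intro sum_mono) auto
  also have "\<dots> = card A * card W * card (injections W n)"
    using assms by (simp add: card_cartesian_product)
  finally show ?thesis .
qed

lemma card_overlapping_pairs_le:
  assumes "finite V" "finite W"
  shows "real (card {p \<in> injections V n \<times> injections W m. fst p ` V \<inter> snd p ` W \<noteq> {}}) * m
    \<le> card V * card W * card (injections V n \<times> injections W m)"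
proof -
  have "{p \<in> injections V n \<times> injections W m. fst p ` V \<inter> snd p ` W \<noteq> {}}
      = Sigma (injections V n) (\<lambda>\<phi>. {\<psi> \<in> injections W m. \<psi> ` W \<inter> \<phi> ` V \<noteq> {}})"
    (is "?overlap = _") by (auto simp: Int_commute)
  then have "real (card ?overlap)
      = (\<Sum>\<phi> \<in> injections V n. real (card {\<psi> \<in> injections W m. \<psi> ` W \<inter> \<phi> ` V \<noteq> {}}))"
    using assms by (simp only:, subst card_SigmaI) (auto simp: finite_injections
        intro: finite_subset[OF _ finite_injections[OF assms(2)]])
  then have "real (card ?overlap) * m
      = (\<Sum>\<phi> \<in> injections V n. real (card {\<psi> \<in> injections W m. \<psi> ` W \<inter> \<phi> ` V \<noteq> {}}) * m)"
    by (simp add: sum_distrib_right)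
  also have "\<dots> \<le> (\<Sum>\<phi> \<in> injections V n. real (card V) * card W * card (injections W m))"
  proof (rule sum_mono)
    fix \<phi> assume "\<phi> \<in> injections V n"
    then have "card (\<phi> ` V) = card V" by (simp add: injections_def card_image)
    then show "real (card {\<psi> \<in> injections W m. \<psi> ` W \<inter> \<phi> ` V \<noteq> {}}) * m
        \<le> real (card V) * card W * card (injections W m)"
      using card_injections_meeting_le[OF assms(2), of "\<phi> ` V" m] assms(1) by simp
  qed
  also have "\<dots> = card V * card W * card (injections V n \<times> injections W m)"
    by (simp add: card_cartesian_product)
  finally show ?thesis .
qed

lemma abs_average_diff_subset_le:
  fixes f :: "'a \<Rightarrow> real"
  assumes "finite S" "D \<subseteq> S" "D \<noteq> {}" "\<And>x. x \<in> S \<Longrightarrow> 0 \<le> f x \<and> f x \<le> 1"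
  shows "\<bar>(\<Sum>x\<in>S. f x) / card S - (\<Sum>x\<in>D. f x) / card D\<bar> \<le> 2 * card (S - D) / card S"
proof -
  have fD: "finite D" using assms finite_subset by blast
  define s where "s = real (card S)"
  define d where "d = real (card D)"
  define A where "A = (\<Sum>x\<in>D. f x)"
  define B where "B = (\<Sum>x\<in>S - D. f x)"
  have d0: "d > 0" using assms fD by (simp add: d_def card_gt_0_iff)
  have ds: "d \<le> s" using assms by (simp add: d_def s_def card_mono)
  have cSD: "real (card (S - D)) = s - d"
    using assms fD by (simp add: card_Diff_subset s_def d_def of_nat_diff card_mono)
  have sum: "(\<Sum>x\<in>S. f x) = A + B"
    using assms by (simp add: A_def B_def sum.subset_diff[of D S])
  have "A \<le> (\<Sum>x\<in>D. 1)" unfolding A_def using assms by (intro sum_mono) auto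
  then have A: "0 \<le> A" "A \<le> d"
    using assms by (auto simp: A_def d_def intro!: sum_nonneg)
  have "B \<le> (\<Sum>x\<in>S - D. 1)" unfolding B_def using assms by (intro sum_mono) auto
  then have B: "0 \<le> B" "B \<le> s - d"
    using assms cSD by (auto simp: B_def intro!: sum_nonneg)
  have "(A + B) / s - A / d = B / s - A / d * ((s - d) / s)"
    using d0 ds by (simp add: field_simps)
  moreover have "A / d * ((s - d) / s) \<le> (s - d) / s"
    using A d0 ds by (intro mult_left_le_one_le) (auto simp: divide_le_eq_1)
  moreover have "0 \<le> A / d * ((s - d) / s)" using A ds d0 by simp
  moreover have "B / s \<le> (s - d) / s" using B ds d0 by (simp add: divide_right_mono)
  moreover have "0 \<le> B / s" using B ds d0 by simp
  ultimately have "\<bar>(A + B) / s - A / d\<bar> \<le> 2 * ((s - d) / s)" unfolding abs_le_iff by linarith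
  then show ?thesis using sum cSD by (simp add: s_def d_def A_def)
qed

lemma copy_density_mult:
  "copy_density n (V, E) G * copy_density m (W, D) G =
    (\<Sum>p \<in> injections V n \<times> injections W m. of_bool (relabel (fst p) E \<union> relabel (snd p) D \<subseteq> G))
      / card (injections V n \<times> injections W m)"
  by (simp add: copy_density_def sum_product sum.cartesian_product card_cartesian_product
      split_def of_bool_conj)

lemma bij_betw_injections_Un:
  assumes disj: "V \<inter> W = {}"
  shows "bij_betw (\<lambda>\<kappa>. (restrict \<kappa> V, restrict \<kappa> W)) (injections (V \<union> W) n)
    {p \<in> injections V n \<times> injections W n. fst p ` V \<inter> snd p ` W = {}}"
proof -
  define merge :: "(nat \<Rightarrow> nat) \<times> (nat \<Rightarrow> nat) \<Rightarrow> nat \<Rightarrow> nat"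
    where "merge p x = (if x \<in> V then fst p x else if x \<in> W then snd p x else undefined)" for p x
  show ?thesis
  proof (rule bij_betw_byWitness[where f' = merge])
    show "\<forall>\<kappa> \<in> injections (V \<union> W) n. merge (restrict \<kappa> V, restrict \<kappa> W) = \<kappa>"
      by (auto simp: merge_def injections_def PiE_def extensional_def fun_eq_iff)
    show "\<forall>p \<in> {p \<in> injections V n \<times> injections W n. fst p ` V \<inter> snd p ` W = {}}.
        (restrict (merge p) V, restrict (merge p) W) = p"
      using disj by (auto simp: merge_def injections_def PiE_def extensional_def fun_eq_iff)
    show "(\<lambda>\<kappa>. (restrict \<kappa> V, restrict \<kappa> W)) ` injections (V \<union> W) n
        \<subseteq> {p \<in> injections V n \<times> injections W n. fst p ` V \<inter> snd p ` W = {}}"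
    proof (rule image_subsetI)
      fix \<kappa> assume "\<kappa> \<in> injections (V \<union> W) n"
      then have \<kappa>: "\<And>y. y \<in> V \<union> W \<Longrightarrow> \<kappa> y < n" "inj_on \<kappa> (V \<union> W)"
        by (auto simp: injections_def PiE_def Pi_def)
      have "restrict \<kappa> V \<in> injections V n" "restrict \<kappa> W \<in> injections W n"
        using \<kappa> by (auto simp: injections_def inj_on_def)
      moreover have "restrict \<kappa> V ` V \<inter> restrict \<kappa> W ` W = {}"
        using \<kappa>(2) disj by (auto simp: inj_on_def)
      ultimately show "(restrict \<kappa> V, restrict \<kappa> W)
          \<in> {p \<in> injections V n \<times> injections W n. fst p ` V \<inter> snd p ` W = {}}" by simp
    qed
    show "merge ` {p \<in> injections V n \<times> injections W n. fst p ` V \<inter> snd p ` W = {}}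
        \<subseteq> injections (V \<union> W) n"
    proof (rule image_subsetI)
      fix p assume "p \<in> {p \<in> injections V n \<times> injections W n. fst p ` V \<inter> snd p ` W = {}}"
      then have p: "fst p \<in> injections V n" "snd p \<in> injections W n" "fst p ` V \<inter> snd p ` W = {}"
        by auto
      have "merge p \<in> (V \<union> W) \<rightarrow>\<^sub>E {0..<n}"
        using p(1,2) by (intro PiE_I) (auto simp: merge_def injections_less)
      moreover have "inj_on (merge p) (V \<union> W)"
        using p disj unfolding inj_on_def merge_def injections_def by (auto dest: inj_onD)
      ultimately show "merge p \<in> injections (V \<union> W) n" by (simp add: injections_def)
    qed
  qed
qed

lemma copy_density_disjoint_Un:
  assumes F: "(V, E) \<in> fgraphs" and H: "(W, D) \<in> fgraphs" and disj: "V \<inter> W = {}"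
    and n: "card V + card W \<le> n" "0 < n"
  shows "\<bar>copy_density n (V, E) G * copy_density n (W, D) G - copy_density n (V \<union> W, E \<union> D) G\<bar>
    \<le> 2 * card V * card W / n"
proof -
  have fV: "finite V" "E \<subseteq> edges_on V" and fW: "finite W" "D \<subseteq> edges_on W"
    using fgraphsD[OF F] fgraphsD[OF H] by auto
  define S where "S = injections V n \<times> injections W n"
  define Dis where "Dis = {p \<in> S. fst p ` V \<inter> snd p ` W = {}}"
  define h where "h p = (of_bool (relabel (fst p) E \<union> relabel (snd p) D \<subseteq> G) :: real)" for p
  have finS: "finite S" using fV fW by (simp add: S_def finite_injections)
  have bij: "bij_betw (\<lambda>\<kappa>. (restrict \<kappa> V, restrict \<kappa> W)) (injections (V \<union> W) n) Dis"
    unfolding Dis_def S_def by (rule bij_betw_injections_Un[OF disj])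
  have prod: "copy_density n (V, E) G * copy_density n (W, D) G = (\<Sum>p \<in> S. h p) / card S"
    unfolding S_def h_def by (rule copy_density_mult)
  have "relabel \<kappa> (E \<union> D) = relabel (restrict \<kappa> V) E \<union> relabel (restrict \<kappa> W) D" for \<kappa>
  proof -
    have "relabel \<kappa> E = relabel (restrict \<kappa> V) E"
      using Union_edges_on_subset[OF fV(2)] by (intro relabel_cong) auto
    moreover have "relabel \<kappa> D = relabel (restrict \<kappa> W) D"
      using Union_edges_on_subset[OF fW(2)] by (intro relabel_cong) auto
    ultimately show ?thesis by (simp add: relabel_Un)
  qed
  then have union: "copy_density n (V \<union> W, E \<union> D) G = (\<Sum>p \<in> Dis. h p) / card Dis"
    using sum.reindex_bij_betw[OF bij, of h] bij_betw_same_card[OF bij]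
    by (simp add: copy_density_def h_def)
  have "injections (V \<union> W) n \<noteq> {}"
    using fV fW disj n by (intro injections_nonempty) (auto simp: card_Un_disjoint)
  then have Dis_ne: "Dis \<noteq> {}" using bij by (auto simp: bij_betw_def)
  have main: "\<bar>copy_density n (V, E) G * copy_density n (W, D) G - copy_density n (V \<union> W, E \<union> D) G\<bar>
      \<le> 2 * card (S - Dis) / card S"
    unfolding prod union using abs_average_diff_subset_le[OF finS _ Dis_ne, of h]
    by (auto simp: Dis_def h_def)
  have "S - Dis = {p \<in> injections V n \<times> injections W n. fst p ` V \<inter> snd p ` W \<noteq> {}}"
    by (auto simp: S_def Dis_def)
  then have "real (card (S - Dis)) * n \<le> card V * card W * card S"
    using card_overlapping_pairs_le[OF fV(1) fW(1), of n n] by (simp add: S_def)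
  moreover have "card S > 0" using finS Dis_ne by (auto simp: card_gt_0_iff Dis_def)
  ultimately have "2 * real (card (S - Dis)) / card S \<le> 2 * card V * card W / n"
    using n(2) by (simp add: field_simps)
  then show ?thesis using main by linarith
qed

lemma relabel_injection_edges:
  assumes "\<phi> \<in> injections V n" "E \<subseteq> edges_on V"
  shows "relabel \<phi> E \<subseteq> edges_on UNIV"
  using relabel_edges_on[OF assms(2)] assms(1) edges_on_mono[of "\<phi> ` V" UNIV]
  by (auto simp: injections_def)

lemma summable_abs_if_summable_weighted_sq:
  fixes d :: "nat \<Rightarrow> real"
  assumes "summable (\<lambda>j. 2 ^ j * (d j)\<^sup>2)"
  shows "summable (\<lambda>j. \<bar>d j\<bar>)"
proof (rule summable_comparison_test)
  show "summable (\<lambda>j. (2 ^ j * (d j)\<^sup>2 + (1 / 2) ^ j) / 2)"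
    using assms by (intro summable_divide summable_add summable_geometric) auto
  have "\<bar>d j\<bar> \<le> (2 ^ j * (d j)\<^sup>2 + (1 / 2) ^ j) / 2" for j
  proof -
    have "0 \<le> (2 ^ j * \<bar>d j\<bar> - 1)\<^sup>2 / 2 ^ j" by simp
    then show ?thesis by (simp add: power2_eq_square field_simps power_one_over abs_mult_self_eq)
  qed
  then show "\<exists>N. \<forall>j\<ge>N. norm \<bar>d j\<bar> \<le> (2 ^ j * (d j)\<^sup>2 + (1 / 2) ^ j) / 2" by auto
qed

lemma convergent_if_summable_diff:
  fixes f :: "nat \<Rightarrow> 'a :: real_normed_vector"
  assumes "summable (\<lambda>j. f (Suc j) - f j)"
  shows "convergent f"
proof -
  have "convergent (\<lambda>j. f 0 + (\<Sum>i<j. f (Suc i) - f i))"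
    using assms by (intro convergent_add convergent_const) (simp add: summable_iff_convergent)
  then show ?thesis by (simp add: sum_lessThan_telescope)
qed

definition two_copies :: "nat set \<Rightarrow> nat set set \<Rightarrow> nat set set" where
  "two_copies V E = E \<union> relabel ((+) (Suc (Max V))) E"

context random_graph
begin

lemma borel_measurable_contains:
  assumes "E \<subseteq> edges_on UNIV"
  shows "(\<lambda>G. of_bool (E \<subseteq> G) :: real) \<in> borel_measurable P"
proof -
  have "(\<lambda>G. of_bool (E \<subseteq> G) :: real) = indicator {G. E \<subseteq> G}"
    by (auto simp: indicator_def)
  moreover have "{G. E \<subseteq> G} \<inter> space P = {G \<in> space P. E \<subseteq> G}" by auto
  ultimately show ?thesis using sets_contains[OF assms] by (simp add: borel_measurable_indicator_iff)
qed

lemma integral_contains: "(\<integral>G. of_bool (E \<subseteq> G) \<partial>P) = contain_prob E"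
proof -
  have "(\<lambda>G. of_bool (E \<subseteq> G) :: real) = indicator {G. E \<subseteq> G}"
    by (auto simp: indicator_def)
  moreover have "{G. E \<subseteq> G} \<inter> space P = {G \<in> space P. E \<subseteq> G}" by auto
  ultimately show ?thesis by (simp add: contain_prob_def)
qed

lemma integrable_contains: "E \<subseteq> edges_on UNIV \<Longrightarrow> integrable P (\<lambda>G. of_bool (E \<subseteq> G) :: real)"
  by (rule integrable_const_bound[where B = 1]) (auto simp: borel_measurable_contains)

lemma borel_measurable_copy_density:
  assumes "(V, E) \<in> fgraphs"
  shows "(\<lambda>G. copy_density n (V, E) G) \<in> borel_measurable P"
  unfolding copy_density_def fst_conv snd_conv using fgraphsD[OF assms]
  by (intro borel_measurable_divide borel_measurable_sum borel_measurable_contains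
      relabel_injection_edges borel_measurable_const) auto

lemma integrable_copy_density: "(V, E) \<in> fgraphs \<Longrightarrow> integrable P (\<lambda>G. copy_density n (V, E) G)"
  by (rule integrable_const_bound[where B = 1])
     (auto simp: borel_measurable_copy_density copy_density_nonneg copy_density_le_1)

lemma integral_copy_density:
  assumes exch: "exchangeable P" and F: "(V, E) \<in> fgraphs" and n: "card V \<le> n"
  shows "(\<integral>G. copy_density n (V, E) G \<partial>P) = contain_prob E"
proof -
  have fV: "finite V" "E \<subseteq> edges_on V" using fgraphsD[OF F] by auto
  have "(\<integral>G. (\<Sum>\<phi> \<in> injections V n. of_bool (relabel \<phi> E \<subseteq> G)) \<partial>P)
      = (\<Sum>\<phi> \<in> injections V n. contain_prob (relabel \<phi> E))"
    using relabel_injection_edges[OF _ fV(2)]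
    by (subst Bochner_Integration.integral_sum) (auto intro!: integrable_contains simp: integral_contains)
  also have "\<dots> = (\<Sum>\<phi> \<in> injections V n. contain_prob E)"
  proof (rule sum.cong)
    fix \<phi> assume "\<phi> \<in> injections V n"
    then have "((V, E), (\<phi> ` V, relabel \<phi> E)) \<in> iso_rel"
      using iso_rel_inj_image[OF F] by (simp add: injections_def)
    then show "contain_prob (relabel \<phi> E) = contain_prob E"
      by (rule contain_prob_iso[OF exch, symmetric])
  qed simp
  finally show ?thesis
    using injections_nonempty[OF fV(1) n] finite_injections[OF fV(1)]
    by (simp add: copy_density_def)
qed


lemma abs_contain_prob_diff_le_1: "\<bar>contain_prob A - contain_prob B\<bar> \<le> 1"
  using contain_prob_nonneg[of A] contain_prob_le_1[of A] contain_prob_nonneg[of B] contain_prob_le_1[of B]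
  by linarith

lemma contain_prob_two_copies:
  assumes exch: "exchangeable P" and F: "(V, E) \<in> fgraphs"
    and \<phi>: "\<phi> \<in> injections V n" and \<psi>: "\<psi> \<in> injections V m" and disj: "\<phi> ` V \<inter> \<psi> ` V = {}"
  shows "contain_prob (relabel \<phi> E \<union> relabel \<psi> E) = contain_prob (two_copies V E)"
proof -
  define k where "k = Suc (Max V)"
  have "finite V" using fgraphsD[OF F] by blast
  then have shift: "V \<inter> (+) k ` V = {}" by (auto simp: k_def dest: Max_ge)
  have "((V, E), (\<phi> ` V, relabel \<phi> E)) \<in> iso_rel"
    using iso_rel_inj_image[OF F] \<phi> by (simp add: injections_def)
  moreover have "(((+) k ` V, relabel ((+) k) E), (\<psi> ` V, relabel \<psi> E)) \<in> iso_rel"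
    using iso_rel_trans[OF iso_rel_sym[OF iso_rel_inj_image[OF F, of "(+) k"]]
        iso_rel_inj_image[OF F, of \<psi>]] \<psi>
    by (simp add: injections_def)
  ultimately have "((V \<union> (+) k ` V, E \<union> relabel ((+) k) E), (\<phi> ` V \<union> \<psi> ` V, relabel \<phi> E \<union> relabel \<psi> E))
      \<in> iso_rel"
    using shift disj by (rule iso_rel_Un)
  from contain_prob_iso[OF exch this] show ?thesis by (simp add: two_copies_def k_def)
qed

lemma integral_copy_density_mult:
  assumes exch: "exchangeable P" and F: "(V, E) \<in> fgraphs"
    and n: "card V \<le> n" and m: "card V \<le> m" "0 < m"
  shows "\<bar>(\<integral>G. copy_density n (V, E) G * copy_density m (V, E) G \<partial>P) - contain_prob (two_copies V E)\<bar>
    \<le> card V ^ 2 / m"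
proof -
  have fV: "finite V" "E \<subseteq> edges_on V" using fgraphsD[OF F] by auto
  define S where "S = injections V n \<times> injections V m"
  define Ov where "Ov = {p \<in> S. fst p ` V \<inter> snd p ` V \<noteq> {}}"
  define t where "t p = contain_prob (relabel (fst p) E \<union> relabel (snd p) E) - contain_prob (two_copies V E)"
    for p
  have finS: "finite S" using fV by (simp add: S_def finite_injections)
  have cS: "card S > 0"
    using finS injections_nonempty[OF fV(1) n] injections_nonempty[OF fV(1) m(1)]
    by (simp add: S_def card_gt_0_iff)
  have edges: "relabel (fst p) E \<union> relabel (snd p) E \<subseteq> edges_on UNIV" if "p \<in> S" for p
    using that relabel_injection_edges[OF _ fV(2), of "fst p" n] relabel_injection_edges[OF _ fV(2), of "snd p" m]
    by (auto simp: S_def mem_Times_iff)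
  have "(\<integral>G. copy_density n (V, E) G * copy_density m (V, E) G \<partial>P)
      = (\<integral>G. (\<Sum>p \<in> S. of_bool (relabel (fst p) E \<union> relabel (snd p) E \<subseteq> G)) \<partial>P) / card S"
    unfolding copy_density_mult S_def[symmetric] by (rule integral_divide_zero)
  also have "(\<integral>G. (\<Sum>p \<in> S. of_bool (relabel (fst p) E \<union> relabel (snd p) E \<subseteq> G)) \<partial>P)
      = (\<Sum>p \<in> S. contain_prob (relabel (fst p) E \<union> relabel (snd p) E))"
    by (subst Bochner_Integration.integral_sum)
       (simp_all only: integral_contains integrable_contains[OF edges])
  finally have "(\<integral>G. copy_density n (V, E) G * copy_density m (V, E) G \<partial>P)
      = (\<Sum>p \<in> S. contain_prob (relabel (fst p) E \<union> relabel (snd p) E)) / card S" .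
  then have "(\<integral>G. copy_density n (V, E) G * copy_density m (V, E) G \<partial>P) - contain_prob (two_copies V E)
      = (\<Sum>p \<in> S. t p) / card S"
    using cS by (simp add: t_def sum_subtractf field_simps)
  moreover have "\<bar>\<Sum>p \<in> S. t p\<bar> \<le> card Ov"
  proof -
    have "\<bar>\<Sum>p \<in> S. t p\<bar> \<le> (\<Sum>p \<in> S. \<bar>t p\<bar>)" by (rule sum_abs)
    also have "\<dots> = (\<Sum>p \<in> Ov. \<bar>t p\<bar>)"
      using contain_prob_two_copies[OF exch F] finS
      by (intro sum.mono_neutral_right) (auto simp: Ov_def S_def t_def)
    also have "\<dots> \<le> (\<Sum>p \<in> Ov. 1)"
      unfolding t_def by (intro sum_mono abs_contain_prob_diff_le_1)
    finally show ?thesis by simp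
  qed
  moreover have "real (card Ov) * m \<le> card V * card V * card S"
    using card_overlapping_pairs_le[OF fV(1) fV(1), of n m] by (simp add: Ov_def S_def)
  ultimately have "\<bar>(\<integral>G. copy_density n (V, E) G * copy_density m (V, E) G \<partial>P)
      - contain_prob (two_copies V E)\<bar> \<le> card Ov / card S"
    using cS by (simp add: abs_divide divide_right_mono)
  also have "\<dots> \<le> card V ^ 2 / m"
    using \<open>real (card Ov) * m \<le> card V * card V * card S\<close> cS m(2)
    by (simp add: field_simps power2_eq_square)
  finally show ?thesis .
qed


lemma integral_copy_density_diff_sq:
  assumes exch: "exchangeable P" and F: "(V, E) \<in> fgraphs" and n: "0 < n" and m: "0 < m"
  shows "(\<integral>G. (copy_density n (V, E) G - copy_density m (V, E) G)\<^sup>2 \<partial>P) \<le> 4 * card V ^ 2 / min n m"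
proof -
  define k where "k = card V"
  define a where "a G = copy_density n (V, E) G" for G
  define b where "b G = copy_density m (V, E) G" for G
  have ab: "0 \<le> a G" "a G \<le> 1" "0 \<le> b G" "b G \<le> 1" for G
    by (simp_all add: a_def b_def copy_density_nonneg copy_density_le_1)
  have sq_le: "(a G - b G)\<^sup>2 \<le> 1" for G
  proof -
    have "\<bar>a G - b G\<bar> \<le> 1" using ab[of G] by linarith
    then show ?thesis by (simp add: abs_square_le_1)
  qed
  have meas: "a \<in> borel_measurable P" "b \<in> borel_measurable P"
    unfolding a_def b_def by (simp_all add: borel_measurable_copy_density[OF F])
  then have int: "integrable P (\<lambda>G. a G * a G)" "integrable P (\<lambda>G. b G * b G)"
    "integrable P (\<lambda>G. a G * b G)"
    using ab by (auto intro!: integrable_const_bound[where B = 1] simp: abs_mult mult_le_one)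
  have int_sq: "integrable P (\<lambda>G. (a G - b G)\<^sup>2)"
  proof (rule integrable_const_bound[where B = 1])
    show "AE G in P. norm ((a G - b G)\<^sup>2) \<le> 1" using sq_le by simp
    show "(\<lambda>G. (a G - b G)\<^sup>2) \<in> borel_measurable P" using meas by measurable
  qed
  show ?thesis
  proof (cases "k \<le> min n m")
    case True
    have "(\<lambda>G. (a G - b G)\<^sup>2) = (\<lambda>G. a G * a G + b G * b G - 2 * (a G * b G))"
      by (simp add: power2_eq_square algebra_simps)
    then have "(\<integral>G. (a G - b G)\<^sup>2 \<partial>P)
        = (\<integral>G. a G * a G \<partial>P) + (\<integral>G. b G * b G \<partial>P) - 2 * (\<integral>G. a G * b G \<partial>P)"
      using int by simp
    moreover have "\<bar>(\<integral>G. a G * a G \<partial>P) - contain_prob (two_copies V E)\<bar> \<le> real k ^ 2 / n"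
      using integral_copy_density_mult[OF exch F, of n n] True n by (simp add: a_def k_def)
    moreover have "\<bar>(\<integral>G. b G * b G \<partial>P) - contain_prob (two_copies V E)\<bar> \<le> real k ^ 2 / m"
      using integral_copy_density_mult[OF exch F, of m m] True m by (simp add: b_def k_def)
    moreover have "\<bar>(\<integral>G. a G * b G \<partial>P) - contain_prob (two_copies V E)\<bar> \<le> real k ^ 2 / m"
      using integral_copy_density_mult[OF exch F, of n m] True m by (simp add: a_def b_def k_def)
    moreover have "real k ^ 2 / n \<le> real k ^ 2 / min n m" "real k ^ 2 / m \<le> real k ^ 2 / min n m"
      using n m by (auto intro!: divide_left_mono simp: min_def)
    ultimately have "(\<integral>G. (a G - b G)\<^sup>2 \<partial>P) \<le> 4 * (real k ^ 2 / min n m)"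
      unfolding abs_le_iff by linarith
    then show ?thesis by (simp add: a_def b_def k_def)
  next
    case False
    have "(\<integral>G. (a G - b G)\<^sup>2 \<partial>P) \<le> (\<integral>G. 1 \<partial>P)"
      using int_sq sq_le by (intro integral_mono) auto
    also have "\<dots> = 1" by (simp add: prob_space)
    also have "1 \<le> 4 * real k ^ 2 / min n m"
    proof -
      have "real (min n m) \<le> real k" using False by linarith
      moreover from this have "real k * 1 \<le> real k * real k"
        using n m by (intro mult_left_mono) auto
      ultimately have "real (min n m) \<le> 4 * real k ^ 2" unfolding power2_eq_square by linarith
      then show ?thesis using n m by simp
    qed
    finally show ?thesis by (simp add: a_def b_def k_def)
  qed
qed

lemma AE_convergent_copy_density:
  assumes exch: "exchangeable P" and F: "(V, E) \<in> fgraphs"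
  shows "AE G in P. convergent (\<lambda>j. copy_density (16 ^ j) (V, E) G)"
proof -
  define C where "C = 4 * real (card V) ^ 2"
  define d where "d j G = copy_density (16 ^ Suc j) (V, E) G - copy_density (16 ^ j) (V, E) G" for j G
  define f where "f j G = ennreal (2 ^ j * (d j G)\<^sup>2)" for j G
  have meas_d: "(\<lambda>G. d j G) \<in> borel_measurable P" for j
    unfolding d_def using borel_measurable_copy_density[OF F] by measurable
  then have meas_f: "f j \<in> borel_measurable P" for j
    unfolding f_def by measurable
  have "(d j G)\<^sup>2 \<le> 1" for j G
  proof -
    have "\<bar>d j G\<bar> \<le> 1"
      using copy_density_nonneg[of "16 ^ Suc j" "(V, E)" G] copy_density_le_1[of "16 ^ Suc j" "(V, E)" G]
        copy_density_nonneg[of "16 ^ j" "(V, E)" G] copy_density_le_1[of "16 ^ j" "(V, E)" G]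
      unfolding d_def by linarith
    then show ?thesis by (simp add: abs_square_le_1)
  qed
  then have int: "integrable P (\<lambda>G. 2 ^ j * (d j G)\<^sup>2)" for j
    using meas_d by (intro integrable_const_bound[where B = "2 ^ j"]) auto
  have "2 ^ j * (\<integral>G. (d j G)\<^sup>2 \<partial>P) \<le> C * (1 / 8) ^ j" for j
  proof -
    have "(\<integral>G. (d j G)\<^sup>2 \<partial>P) \<le> C / 16 ^ j"
      using integral_copy_density_diff_sq[OF exch F, of "16 ^ Suc j" "16 ^ j"]
      by (simp add: d_def C_def min_def)
    then have "2 ^ j * (\<integral>G. (d j G)\<^sup>2 \<partial>P) \<le> 2 ^ j * (C / 16 ^ j)"
      by (rule mult_left_mono) simp
    moreover have "(16 :: real) ^ j = 2 ^ j * 8 ^ j" by (simp flip: power_mult_distrib)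
    ultimately show ?thesis by (simp add: power_one_over)
  qed
  then have le: "integral\<^sup>N P (f j) \<le> ennreal (C * (1 / 8) ^ j)" for j
    unfolding f_def using nn_integral_eq_integral[OF int] by (simp add: ennreal_leI)
  have "(\<integral>\<^sup>+ G. (\<Sum>j. f j G) \<partial>P) = (\<Sum>j. integral\<^sup>N P (f j))"
    by (rule nn_integral_suminf[OF meas_f])
  also have "\<dots> \<le> (\<Sum>j. ennreal (C * (1 / 8) ^ j))"
    using le by (intro suminf_le) auto
  also have "\<dots> = ennreal (\<Sum>j. C * (1 / 8) ^ j)"
    by (intro suminf_ennreal2 summable_mult summable_geometric) (auto simp: C_def)
  finally have "(\<integral>\<^sup>+ G. (\<Sum>j. f j G) \<partial>P) \<noteq> \<infinity>"
    by (auto simp: top_unique)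
  then have "AE G in P. (\<Sum>j. f j G) \<noteq> \<infinity>"
    by (intro nn_integral_PInf_AE) (use meas_f in measurable)
  then show ?thesis
  proof (rule AE_mp, intro AE_I2 impI)
    fix G assume "(\<Sum>j. f j G) \<noteq> \<infinity>"
    then have "summable (\<lambda>j. 2 ^ j * (d j G)\<^sup>2)"
      unfolding f_def by (intro summable_suminf_not_top) auto
    then have "summable (\<lambda>j. d j G)"
      by (rule summable_rabs_cancel[OF summable_abs_if_summable_weighted_sq])
    then show "convergent (\<lambda>j. copy_density (16 ^ j) (V, E) G)"
      by (intro convergent_if_summable_diff) (simp add: d_def)
  qed
qed

end

lemma topspace_Uhat_top: "topspace Uhat_top = Uhat"
  by (auto simp: Uhat_top_def topspace_product_topology Uhat_def)

lemma space_borel_Uhat: "space (borel_of Uhat_top) = Uhat"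
  using openin_subset[of Uhat_top] topspace_Uhat_top
  by (auto simp: borel_of_def space_measure_of_conv)

definition coord_box :: "graph_class set \<Rightarrow> (graph_class \<Rightarrow> real set) \<Rightarrow> (graph_class \<Rightarrow> real) set" where
  "coord_box J U = {\<rho> \<in> Uhat. \<forall>s\<in>J. \<rho> s \<in> U s}"

definition coord_boxes :: "(graph_class \<Rightarrow> real) set set" where
  "coord_boxes = {coord_box J U | J U. finite J \<and> J \<subseteq> Ucl \<and> (\<forall>s\<in>J. open (U s))}"

lemma coord_boxes_subset_Pow: "coord_boxes \<subseteq> Pow Uhat"
  by (auto simp: coord_boxes_def coord_box_def)

lemma Uhat_in_coord_boxes: "Uhat \<in> coord_boxes"
  unfolding coord_boxes_def coord_box_def by (intro CollectI exI[of _ "{}"]) auto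

lemma Int_stable_coord_boxes: "Int_stable coord_boxes"
proof (rule Int_stableI)
  fix A B assume "A \<in> coord_boxes" "B \<in> coord_boxes"
  then obtain J1 U1 J2 U2 where A: "A = coord_box J1 U1" "finite J1" "J1 \<subseteq> Ucl" "\<forall>s\<in>J1. open (U1 s)"
    and B: "B = coord_box J2 U2" "finite J2" "J2 \<subseteq> Ucl" "\<forall>s\<in>J2. open (U2 s)"
    unfolding coord_boxes_def by blast
  define U where "U s = (if s \<in> J1 then U1 s else UNIV) \<inter> (if s \<in> J2 then U2 s else UNIV)" for s
  have "A \<inter> B = coord_box (J1 \<union> J2) U"
    unfolding A(1) B(1) coord_box_def U_def by auto
  moreover have "\<forall>s\<in>J1 \<union> J2. open (U s)" using A(4) B(4) unfolding U_def by auto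
  ultimately show "A \<inter> B \<in> coord_boxes"
    using A(2,3) B(2,3) unfolding coord_boxes_def by blast
qed

lemma openin_coord_box:
  assumes "finite J" "J \<subseteq> Ucl" "\<forall>s\<in>J. open (U s)"
  shows "openin Uhat_top (coord_box J U)"
  using assms
proof (induction J rule: finite_induct)
  case empty
  then show ?case by (simp add: coord_box_def flip: topspace_Uhat_top)
next
  case (insert s J)
  have "continuous_map Uhat_top euclideanreal (\<lambda>\<rho>. \<rho> s)"
    unfolding Uhat_top_def using insert.prems
    by (intro continuous_map_from_subtopology continuous_map_product_projection) auto
  then have "openin Uhat_top {\<rho> \<in> topspace Uhat_top. \<rho> s \<in> U s}"
    using insert.prems by (intro openin_continuous_map_preimage) auto
  moreover have "coord_box (insert s J) U = coord_box J U \<inter> {\<rho> \<in> topspace Uhat_top. \<rho> s \<in> U s}"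
    by (auto simp: coord_box_def topspace_Uhat_top)
  ultimately show ?case using insert by auto
qed

lemma obtain_rat_interval:
  fixes x :: real
  assumes "open V" "x \<in> V"
  obtains a b where "a \<in> \<rat>" "b \<in> \<rat>" "a < x" "x < b" "{a<..<b} \<subseteq> V"
proof -
  obtain e where e: "e > 0" "ball x e \<subseteq> V" using assms openE by blast
  obtain a where a: "a \<in> \<rat>" "x - e < a" "a < x" using Rats_dense_in_real[of "x - e" x] e by auto
  obtain b where b: "b \<in> \<rat>" "x < b" "b < x + e" using Rats_dense_in_real[of x "x + e"] e by auto
  have "{a<..<b} \<subseteq> ball x e" using a b by (auto simp: dist_real_def)
  then show ?thesis using that a b e by blast
qed

definition rat_boxes :: "(graph_class \<Rightarrow> real) set set" where
  "rat_boxes = (\<lambda>(J, a, b). coord_box J (\<lambda>s. {a s<..<b s})) `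
     (SIGMA J : {J. finite J \<and> J \<subseteq> Ucl}. (J \<rightarrow>\<^sub>E \<rat>) \<times> (J \<rightarrow>\<^sub>E \<rat>))"

lemma countable_rat_boxes: "countable rat_boxes"
  unfolding rat_boxes_def
  by (intro countable_image countable_SIGMA countable_Collect_finite_subset countable_Ucl
      countable_PiE countable_rat) auto

lemma rat_boxes_subset_coord_boxes: "rat_boxes \<subseteq> coord_boxes"
proof
  fix B assume "B \<in> rat_boxes"
  then obtain J a b where "B = coord_box J (\<lambda>s. {a s<..<b s})" "finite J" "J \<subseteq> Ucl"
    by (auto simp: rat_boxes_def)
  then show "B \<in> coord_boxes" unfolding coord_boxes_def
    by (intro CollectI exI[of _ J] exI[of _ "\<lambda>s. {a s<..<b s}"]) auto
qed

lemma rat_box_between: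
  assumes "openin Uhat_top T" "\<rho> \<in> T"
  obtains B where "B \<in> rat_boxes" "\<rho> \<in> B" "B \<subseteq> T"
proof -
  obtain T' where T': "openin (product_topology (\<lambda>_. euclideanreal) Ucl) T'" "T = T' \<inter> Uhat"
    using assms(1) by (auto simp: Uhat_top_def openin_subtopology)
  then obtain X where X: "\<rho> \<in> (\<Pi>\<^sub>E s\<in>Ucl. X s)" "\<And>s. open (X s)"
      "finite {s. X s \<noteq> UNIV}" "(\<Pi>\<^sub>E s\<in>Ucl. X s) \<subseteq> T'"
    using product_topology_open_contains_basis[OF T'(1), of \<rho>] assms(2) by auto
  define J where "J = {s \<in> Ucl. X s \<noteq> UNIV}"
  have "finite J" using X(3) by (auto simp: J_def intro: finite_subset)
  have "\<exists>ab. fst ab \<in> \<rat> \<and> snd ab \<in> \<rat> \<and> fst ab < \<rho> s \<and> \<rho> s < snd ab \<and> {fst ab<..<snd ab} \<subseteq> X s"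
    if "s \<in> J" for s
  proof -
    have "\<rho> s \<in> X s" using X(1) that by (auto simp: J_def)
    then obtain a b where "a \<in> \<rat>" "b \<in> \<rat>" "a < \<rho> s" "\<rho> s < b" "{a<..<b} \<subseteq> X s"
      by (rule obtain_rat_interval[OF X(2)])
    then show ?thesis by (intro exI[of _ "(a, b)"]) simp
  qed
  then obtain ab where ab: "\<And>s. s \<in> J \<Longrightarrow> fst (ab s) \<in> \<rat> \<and> snd (ab s) \<in> \<rat> \<and>
      fst (ab s) < \<rho> s \<and> \<rho> s < snd (ab s) \<and> {fst (ab s)<..<snd (ab s)} \<subseteq> X s"
    by metis
  define a where "a = restrict (fst \<circ> ab) J"
  define b where "b = restrict (snd \<circ> ab) J"
  define B where "B = coord_box J (\<lambda>s. {a s<..<b s})"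
  show ?thesis
  proof (rule that)
    show "B \<in> rat_boxes" unfolding rat_boxes_def B_def
      using \<open>finite J\<close> ab by (intro image_eqI[where x = "(J, a, b)"]) (auto simp: J_def a_def b_def)
    show "\<rho> \<in> B" using ab T'(2) assms(2) by (auto simp: B_def coord_box_def a_def b_def)
    show "B \<subseteq> T"
    proof
      fix \<sigma> assume \<sigma>: "\<sigma> \<in> B"
      then have "\<sigma> \<in> Uhat" by (simp add: B_def coord_box_def)
      moreover have "\<sigma> \<in> (\<Pi>\<^sub>E s\<in>Ucl. X s)"
      proof (rule PiE_I)
        fix s assume "s \<in> Ucl"
        show "\<sigma> s \<in> X s"
        proof (cases "s \<in> J")
          case True
          then have "a s < \<sigma> s" "\<sigma> s < b s" using \<sigma> by (auto simp: B_def coord_box_def)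
          then show ?thesis using ab[OF True] True by (auto simp: a_def b_def)
        next
          case False
          then show ?thesis using \<open>s \<in> Ucl\<close> by (auto simp: J_def)
        qed
      next
        fix s assume "s \<notin> Ucl"
        then show "\<sigma> s = undefined" using \<open>\<sigma> \<in> Uhat\<close> by (auto simp: Uhat_def PiE_def extensional_def)
      qed
      ultimately show "\<sigma> \<in> T" using X(4) T'(2) by auto
    qed
  qed
qed

lemma sets_borel_Uhat: "sets (borel_of Uhat_top) = sigma_sets Uhat coord_boxes"
proof -
  have "sets (borel_of Uhat_top) = sigma_sets Uhat {T. openin Uhat_top T}"
    using openin_subset[of Uhat_top] topspace_Uhat_top
    by (auto simp: borel_of_def sets_measure_of_conv)
  also have "\<dots> = sigma_sets Uhat coord_boxes"
  proof (rule sigma_sets_eqI)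
    fix T assume "T \<in> {T. openin Uhat_top T}"
    then have "T = \<Union>{B \<in> rat_boxes. B \<subseteq> T}"
      using rat_box_between[of T] by blast
    moreover have "\<Union>{B \<in> rat_boxes. B \<subseteq> T} \<in> sigma_sets Uhat coord_boxes"
      using countable_rat_boxes rat_boxes_subset_coord_boxes
      by (intro sigma_sets_UNION) (auto intro: countable_subset sigma_sets.Basic)
    ultimately show "T \<in> sigma_sets Uhat coord_boxes" by simp
  next
    fix B assume "B \<in> coord_boxes"
    then show "B \<in> sigma_sets Uhat {T. openin Uhat_top T}"
      by (auto simp: coord_boxes_def intro!: sigma_sets.Basic openin_coord_box)
  qed
  finally show ?thesis .
qed

lemma measurable_into_Uhat:
  assumes "f \<in> space M \<rightarrow> Uhat" "\<And>s. s \<in> Ucl \<Longrightarrow> (\<lambda>x. f x s) \<in> borel_measurable M"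
  shows "f \<in> measurable M (borel_of Uhat_top)"
proof -
  have "f \<in> measurable M (measure_of Uhat coord_boxes (\<lambda>_. 0))"
  proof (rule measurable_measure_of[OF coord_boxes_subset_Pow assms(1)])
    fix B assume "B \<in> coord_boxes"
    then obtain J U where B: "B = coord_box J U" "finite J" "J \<subseteq> Ucl" "\<forall>s\<in>J. open (U s)"
      by (auto simp: coord_boxes_def)
    have "f -` B \<inter> space M = {x \<in> space M. \<forall>s\<in>J. f x s \<in> U s}"
      using assms(1) by (auto simp: B(1) coord_box_def)
    also have "\<dots> \<in> sets M"
    proof (rule sets.sets_Collect_finite_All[OF _ B(2)])
      fix s assume "s \<in> J"
      then have "(\<lambda>x. f x s) -` U s \<inter> space M \<in> sets M"
        using B by (intro measurable_sets[OF assms(2)] borel_open) auto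
      moreover have "(\<lambda>x. f x s) -` U s \<inter> space M = {x \<in> space M. f x s \<in> U s}" by auto
      ultimately show "{x \<in> space M. f x s \<in> U s} \<in> sets M" by simp
    qed
    finally show "f -` B \<inter> space M \<in> sets M" .
  qed
  then show ?thesis
    using coord_boxes_subset_Pow by (simp add: measurable_def sets_borel_Uhat space_borel_Uhat sets_measure_of_conv)
qed

lemma borel_measurable_coord: "s \<in> Ucl \<Longrightarrow> (\<lambda>\<rho>. \<rho> s) \<in> borel_measurable (borel_of Uhat_top)"
proof (rule borel_measurableI)
  fix S :: "real set" assume "s \<in> Ucl" "open S"
  moreover have "(\<lambda>\<rho>. \<rho> s) -` S \<inter> space (borel_of Uhat_top) = coord_box {s} (\<lambda>_. S)"
    by (auto simp: space_borel_Uhat coord_box_def)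
  ultimately show "(\<lambda>\<rho>. \<rho> s) -` S \<inter> space (borel_of Uhat_top) \<in> sets (borel_of Uhat_top)"
    unfolding sets_borel_Uhat by (auto simp: coord_boxes_def intro!: sigma_sets.Basic)
qed

lemma Uhat_empty_class: "\<rho> \<in> Uhat \<Longrightarrow> \<rho> empty_class = 1"
  by (simp add: Uhat_def is_character_def)

lemma Uhat_uplus: "\<rho> \<in> Uhat \<Longrightarrow> s \<in> Ucl \<Longrightarrow> t \<in> Ucl \<Longrightarrow> \<rho> (uplus s t) = \<rho> s * \<rho> t"
  by (simp add: Uhat_def is_character_def)

lemma abs_Uhat_le_1:
  assumes \<rho>: "\<rho> \<in> Uhat" and s: "s \<in> Ucl"
  shows "\<bar>\<rho> s\<bar> \<le> 1"
proof (rule ccontr)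
  assume "\<not> \<bar>\<rho> s\<bar> \<le> 1"
  obtain B where B: "\<forall>t\<in>Ucl. \<bar>\<rho> t\<bar> \<le> B" using \<rho> by (auto simp: Uhat_def)
  obtain k where "B < \<bar>\<rho> s\<bar> ^ k" using real_arch_pow \<open>\<not> \<bar>\<rho> s\<bar> \<le> 1\<close> by fastforce
  moreover have "(uplus s ^^ k) empty_class \<in> Ucl \<and> \<rho> ((uplus s ^^ k) empty_class) = \<rho> s ^ k"
    by (induction k) (simp_all add: empty_class_in_Ucl uplus_in_Ucl Uhat_empty_class Uhat_uplus \<rho> s)
  ultimately show False using B by (metis power_abs not_le)
qed

lemma const_1_in_Uhat: "(\<lambda>s\<in>Ucl. 1) \<in> Uhat"
  unfolding Uhat_def is_character_def
  by (auto simp: empty_class_in_Ucl uplus_in_Ucl intro: exI[of _ 1])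

definition char_combination :: "((graph_class \<Rightarrow> real) \<Rightarrow> real) \<Rightarrow> bool" where
  "char_combination f \<longleftrightarrow> (\<exists>cs :: (real \<times> graph_class) list. (\<forall>p\<in>set cs. snd p \<in> Ucl) \<and>
     (\<forall>\<rho>\<in>Uhat. f \<rho> = (\<Sum>p\<leftarrow>cs. fst p * \<rho> (snd p))))"

lemma char_combination_cong: "char_combination f \<Longrightarrow> (\<And>\<rho>. \<rho> \<in> Uhat \<Longrightarrow> f \<rho> = g \<rho>) \<Longrightarrow> char_combination g"
  by (auto simp: char_combination_def)

lemma char_combination_const: "char_combination (\<lambda>\<rho>. c)"
  unfolding char_combination_def
  by (intro exI[of _ "[(c, empty_class)]"]) (auto simp: empty_class_in_Ucl Uhat_empty_class)

lemma char_combination_coord: "s \<in> Ucl \<Longrightarrow> char_combination (\<lambda>\<rho>. \<rho> s)"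
  unfolding char_combination_def by (intro exI[of _ "[(1, s)]"]) auto

lemma char_combination_add:
  assumes "char_combination f" "char_combination g"
  shows "char_combination (\<lambda>\<rho>. f \<rho> + g \<rho>)"
proof -
  obtain cs ds where "\<forall>p\<in>set cs. snd p \<in> Ucl" "\<forall>\<rho>\<in>Uhat. f \<rho> = (\<Sum>p\<leftarrow>cs. fst p * \<rho> (snd p))"
    "\<forall>p\<in>set ds. snd p \<in> Ucl" "\<forall>\<rho>\<in>Uhat. g \<rho> = (\<Sum>p\<leftarrow>ds. fst p * \<rho> (snd p))"
    using assms by (auto simp: char_combination_def)
  then show ?thesis unfolding char_combination_def by (intro exI[of _ "cs @ ds"]) auto
qed

text \<open>Products stay combinations because characters turn products of values into values at disjoint
  unions.\<close>

lemma char_combination_mult: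
  assumes "char_combination f" "char_combination g"
  shows "char_combination (\<lambda>\<rho>. f \<rho> * g \<rho>)"
proof -
  obtain cs ds where cs: "\<forall>p\<in>set cs. snd p \<in> Ucl" "\<forall>\<rho>\<in>Uhat. f \<rho> = (\<Sum>p\<leftarrow>cs. fst p * \<rho> (snd p))"
    and ds: "\<forall>q\<in>set ds. snd q \<in> Ucl" "\<forall>\<rho>\<in>Uhat. g \<rho> = (\<Sum>q\<leftarrow>ds. fst q * \<rho> (snd q))"
    using assms by (auto simp: char_combination_def)
  define es where "es = concat (map (\<lambda>p. map (\<lambda>q. (fst p * fst q, uplus (snd p) (snd q))) ds) cs)"
  have "\<forall>e\<in>set es. snd e \<in> Ucl" using cs(1) ds(1) by (auto simp: es_def uplus_in_Ucl)
  moreover have "f \<rho> * g \<rho> = (\<Sum>e\<leftarrow>es. fst e * \<rho> (snd e))" if \<rho>: "\<rho> \<in> Uhat" for \<rho>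
  proof -
    have "f \<rho> * g \<rho> = (\<Sum>p\<leftarrow>cs. \<Sum>q\<leftarrow>ds. (fst p * \<rho> (snd p)) * (fst q * \<rho> (snd q)))"
      using cs(2) ds(2) \<rho> by (simp add: sum_list_const_mult sum_list_mult_const)
    also have "\<dots> = (\<Sum>p\<leftarrow>cs. \<Sum>q\<leftarrow>ds. fst p * fst q * \<rho> (uplus (snd p) (snd q)))"
      using cs(1) ds(1) Uhat_uplus[OF \<rho>]
      by (intro arg_cong[where f = sum_list] map_cong refl) (simp add: algebra_simps)
    also have "\<dots> = (\<Sum>e\<leftarrow>es. fst e * \<rho> (snd e))"
      unfolding es_def by (induction cs) (simp_all add: comp_def)
    finally show ?thesis .
  qed
  ultimately show ?thesis unfolding char_combination_def by blast
qed

lemma char_combination_sum: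
  "finite I \<Longrightarrow> (\<And>i. i \<in> I \<Longrightarrow> char_combination (f i)) \<Longrightarrow> char_combination (\<lambda>\<rho>. \<Sum>i\<in>I. f i \<rho>)"
  by (induction I rule: finite_induct) (auto intro: char_combination_add char_combination_const)

lemma char_combination_prod:
  "finite I \<Longrightarrow> (\<And>i. i \<in> I \<Longrightarrow> char_combination (f i)) \<Longrightarrow> char_combination (\<lambda>\<rho>. \<Prod>i\<in>I. f i \<rho>)"
  by (induction I rule: finite_induct) (auto intro: char_combination_mult char_combination_const)

lemma char_combination_power: "char_combination f \<Longrightarrow> char_combination (\<lambda>\<rho>. f \<rho> ^ k)"
  by (induction k) (auto intro: char_combination_mult char_combination_const)

locale Uhat_prob =
  fixes M :: "(graph_class \<Rightarrow> real) measure"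
  assumes prob_space_M: "prob_space M" and sets_M: "sets M = sets (borel_of Uhat_top)"
begin

sublocale prob_space M by (rule prob_space_M)

lemma space_M: "space M = Uhat"
  using sets_eq_imp_space_eq[OF sets_M] space_borel_Uhat by simp

lemma borel_measurable_coord_M: "s \<in> Ucl \<Longrightarrow> (\<lambda>\<rho>. \<rho> s) \<in> borel_measurable M"
  using borel_measurable_coord measurable_cong_sets[OF sets_M refl] by blast

lemma integrable_coord: "s \<in> Ucl \<Longrightarrow> integrable M (\<lambda>\<rho>. \<rho> s)"
  by (rule integrable_const_bound[where B = 1])
     (auto simp: space_M abs_Uhat_le_1 borel_measurable_coord_M intro!: AE_I2)

lemma integral_char_combination:
  assumes "\<forall>p\<in>set cs. snd p \<in> Ucl"
  shows "integrable M (\<lambda>\<rho>. \<Sum>p\<leftarrow>cs. fst p * \<rho> (snd p)) \<and>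
    (\<integral>\<rho>. (\<Sum>p\<leftarrow>cs. fst p * \<rho> (snd p)) \<partial>M) = (\<Sum>p\<leftarrow>cs. fst p * (\<integral>\<rho>. \<rho> (snd p) \<partial>M))"
  using assms by (induction cs) (simp_all add: integrable_coord)

lemma integral_prod_tendsto:
  fixes g :: "nat \<Rightarrow> graph_class \<Rightarrow> real \<Rightarrow> real" and h :: "graph_class \<Rightarrow> real \<Rightarrow> real"
  assumes J: "finite J" "J \<subseteq> Ucl"
    and meas: "\<And>N s. s \<in> J \<Longrightarrow> g N s \<in> borel_measurable borel" "\<And>s. s \<in> J \<Longrightarrow> h s \<in> borel_measurable borel"
    and lim: "\<And>s x. s \<in> J \<Longrightarrow> \<bar>x\<bar> \<le> 1 \<Longrightarrow> (\<lambda>N. g N s x) \<longlonglongrightarrow> h s x"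
    and bound: "\<And>N s x. s \<in> J \<Longrightarrow> \<bar>x\<bar> \<le> 1 \<Longrightarrow> \<bar>g N s x\<bar> \<le> 1"
  shows "(\<lambda>N. \<integral>\<rho>. (\<Prod>s\<in>J. g N s (\<rho> s)) \<partial>M) \<longlonglongrightarrow> (\<integral>\<rho>. (\<Prod>s\<in>J. h s (\<rho> s)) \<partial>M)"
proof (rule integral_dominated_convergence[where w = "\<lambda>_. 1"])
  have coord: "(\<lambda>\<rho>. \<rho> s) \<in> borel_measurable M" if "s \<in> J" for s
    using that J borel_measurable_coord_M by blast
  show "(\<lambda>\<rho>. \<Prod>s\<in>J. h s (\<rho> s)) \<in> borel_measurable M"
    using measurable_comp[OF coord meas(2)] by (intro borel_measurable_prod) (simp add: comp_def)
  show "(\<lambda>\<rho>. \<Prod>s\<in>J. g N s (\<rho> s)) \<in> borel_measurable M" for N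
    using measurable_comp[OF coord meas(1)] by (intro borel_measurable_prod) (simp add: comp_def)
  show "integrable M (\<lambda>_. 1 :: real)" by simp
  show "AE \<rho> in M. (\<lambda>N. \<Prod>s\<in>J. g N s (\<rho> s)) \<longlonglongrightarrow> (\<Prod>s\<in>J. h s (\<rho> s))"
    using J lim abs_Uhat_le_1 by (intro AE_I2 tendsto_prod) (auto simp: space_M)
  show "AE \<rho> in M. norm (\<Prod>s\<in>J. g N s (\<rho> s)) \<le> 1" for N
    using J bound abs_Uhat_le_1 by (intro AE_I2) (auto simp: space_M abs_prod intro!: prod_le_1)
qed

end

lemma integral_char_combination_eq:
  assumes "Uhat_prob M" "Uhat_prob N" "\<forall>s\<in>Ucl. (\<integral>\<rho>. \<rho> s \<partial>M) = (\<integral>\<rho>. \<rho> s \<partial>N)"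
    and "char_combination f"
  shows "(\<integral>\<rho>. f \<rho> \<partial>M) = (\<integral>\<rho>. f \<rho> \<partial>N)"
proof -
  obtain cs where cs: "\<forall>p\<in>set cs. snd p \<in> Ucl" "\<forall>\<rho>\<in>Uhat. f \<rho> = (\<Sum>p\<leftarrow>cs. fst p * \<rho> (snd p))"
    using assms(4) by (auto simp: char_combination_def)
  have "(\<integral>\<rho>. f \<rho> \<partial>K) = (\<Sum>p\<leftarrow>cs. fst p * (\<integral>\<rho>. \<rho> (snd p) \<partial>K))" if "Uhat_prob K" for K
  proof -
    have "(\<integral>\<rho>. f \<rho> \<partial>K) = (\<integral>\<rho>. (\<Sum>p\<leftarrow>cs. fst p * \<rho> (snd p)) \<partial>K)"
      using cs(2) Uhat_prob.space_M[OF that] by (intro Bochner_Integration.integral_cong) auto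
    then show ?thesis using Uhat_prob.integral_char_combination[OF that cs(1)] by simp
  qed
  then show ?thesis using assms(1,2,3) cs(1) by (simp cong: map_cong)
qed

definition bernstein_approx :: "(real \<Rightarrow> real) \<Rightarrow> nat \<Rightarrow> real \<Rightarrow> real" where
  "bernstein_approx h N x = (\<Sum>k\<le>N. h (2 * (k / N) - 1) * Bernstein N k ((x + 1) / 2))"

lemma char_combination_bernstein_approx:
  assumes "s \<in> Ucl"
  shows "char_combination (\<lambda>\<rho>. bernstein_approx h N (\<rho> s))"
proof -
  have "char_combination (\<lambda>\<rho>. 1 / 2 * \<rho> s + 1 / 2)"
    by (intro char_combination_add char_combination_mult char_combination_const char_combination_coord assms)
  then have y: "char_combination (\<lambda>\<rho>. (\<rho> s + 1) / 2)"
    by (rule char_combination_cong) (simp add: field_simps)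
  have "char_combination (\<lambda>\<rho>. 1 + (-1) * ((\<rho> s + 1) / 2))"
    by (intro char_combination_add char_combination_mult char_combination_const y)
  then have "char_combination (\<lambda>\<rho>. 1 - (\<rho> s + 1) / 2)"
    by (rule char_combination_cong) (simp add: field_simps)
  then show ?thesis unfolding bernstein_approx_def Bernstein_def
    by (intro char_combination_sum char_combination_mult char_combination_const char_combination_power y)
       auto
qed

lemma continuous_bernstein_approx: "continuous_on UNIV (bernstein_approx h N)"
  unfolding bernstein_approx_def Bernstein_def by (intro continuous_intros) auto

lemma bernstein_approx_tendsto:
  assumes "continuous_on UNIV h" "\<bar>x\<bar> \<le> 1"
  shows "(\<lambda>N. bernstein_approx h N x) \<longlonglongrightarrow> h x"
proof -
  define g where "g y = h (2 * y - 1)" for y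
  have "continuous_on {0..1} g" unfolding g_def
    by (intro continuous_on_compose2[OF assms(1)] continuous_intros) auto
  moreover have "(x + 1) / 2 \<in> {0..1}" using assms(2) by (auto simp: abs_le_iff)
  ultimately have "\<forall>\<^sub>F N in sequentially. \<bar>g ((x + 1) / 2) - (\<Sum>k\<le>N. g (k / N) * Bernstein N k ((x + 1) / 2))\<bar> < e"
    if "e > 0" for e
    using Bernstein_Weierstrass[of g e] that unfolding eventually_sequentially by blast
  moreover have "g ((x + 1) / 2) = h x" by (simp add: g_def field_simps)
  moreover have "(\<Sum>k\<le>N. g (k / N) * Bernstein N k ((x + 1) / 2)) = bernstein_approx h N x" for N
    by (simp add: g_def bernstein_approx_def)
  ultimately show ?thesis
    by (simp add: tendsto_iff dist_real_def abs_minus_commute)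
qed

lemma abs_bernstein_approx_le_1:
  assumes "\<And>y. \<bar>y\<bar> \<le> 1 \<Longrightarrow> \<bar>h y\<bar> \<le> 1" "\<bar>x\<bar> \<le> 1"
  shows "\<bar>bernstein_approx h N x\<bar> \<le> 1"
proof -
  have y: "0 \<le> (x + 1) / 2" "(x + 1) / 2 \<le> 1" using assms(2) by (auto simp: abs_le_iff)
  have "\<bar>bernstein_approx h N x\<bar> \<le> (\<Sum>k\<le>N. \<bar>h (2 * (k / N) - 1) * Bernstein N k ((x + 1) / 2)\<bar>)"
    unfolding bernstein_approx_def by (rule sum_abs)
  also have "\<dots> \<le> (\<Sum>k\<le>N. Bernstein N k ((x + 1) / 2))"
  proof (rule sum_mono)
    fix k assume "k \<in> {..N}"
    then have "0 \<le> real k / N" "real k / N \<le> 1" by (auto simp: divide_le_eq_1)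
    then have "\<bar>2 * (k / N) - 1\<bar> \<le> 1" by (auto simp: abs_le_iff)
    then have "\<bar>h (2 * (k / N) - 1)\<bar> \<le> 1" by (rule assms(1))
    moreover have "0 \<le> Bernstein N k ((x + 1) / 2)" using y by (rule Bernstein_nonneg)
    ultimately show "\<bar>h (2 * (k / N) - 1) * Bernstein N k ((x + 1) / 2)\<bar> \<le> Bernstein N k ((x + 1) / 2)"
      by (simp add: abs_mult mult_left_le_one_le)
  qed
  also have "\<dots> = 1" by simp
  finally show ?thesis .
qed

lemma integral_prod_continuous_eq:
  fixes h :: "graph_class \<Rightarrow> real \<Rightarrow> real"
  assumes MN: "Uhat_prob M" "Uhat_prob N" "\<forall>s\<in>Ucl. (\<integral>\<rho>. \<rho> s \<partial>M) = (\<integral>\<rho>. \<rho> s \<partial>N)"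
    and J: "finite J" "J \<subseteq> Ucl" and h: "\<And>s. s \<in> J \<Longrightarrow> continuous_on UNIV (h s)"
    and h_le: "\<And>s x. s \<in> J \<Longrightarrow> \<bar>x\<bar> \<le> 1 \<Longrightarrow> \<bar>h s x\<bar> \<le> 1"
  shows "(\<integral>\<rho>. (\<Prod>s\<in>J. h s (\<rho> s)) \<partial>M) = (\<integral>\<rho>. (\<Prod>s\<in>J. h s (\<rho> s)) \<partial>N)"
proof -
  have lim: "(\<lambda>n. \<integral>\<rho>. (\<Prod>s\<in>J. bernstein_approx (h s) n (\<rho> s)) \<partial>K) \<longlonglongrightarrow> (\<integral>\<rho>. (\<Prod>s\<in>J. h s (\<rho> s)) \<partial>K)"
    if "Uhat_prob K" for K
    using J h h_le
    by (intro Uhat_prob.integral_prod_tendsto[OF that] borel_measurable_continuous_onI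
        continuous_bernstein_approx bernstein_approx_tendsto abs_bernstein_approx_le_1) auto
  have "(\<integral>\<rho>. (\<Prod>s\<in>J. bernstein_approx (h s) n (\<rho> s)) \<partial>N)
      = (\<integral>\<rho>. (\<Prod>s\<in>J. bernstein_approx (h s) n (\<rho> s)) \<partial>M)" for n
    using J by (intro integral_char_combination_eq[OF MN(2,1)] char_combination_prod
        char_combination_bernstein_approx) (auto simp: MN(3))
  with lim[OF MN(2)] have "(\<lambda>n. \<integral>\<rho>. (\<Prod>s\<in>J. bernstein_approx (h s) n (\<rho> s)) \<partial>M)
      \<longlonglongrightarrow> (\<integral>\<rho>. (\<Prod>s\<in>J. h s (\<rho> s)) \<partial>N)" by simp
  with lim[OF MN(1)] show ?thesis by (rule LIMSEQ_unique)
qed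


definition open_cutoff :: "nat \<Rightarrow> real set \<Rightarrow> real \<Rightarrow> real" where
  "open_cutoff n U x = (if U = UNIV then 1 else min 1 (n * infdist x (- U)))"

lemma continuous_open_cutoff: "continuous_on UNIV (open_cutoff n U)"
  unfolding open_cutoff_def by (cases "U = UNIV") (auto intro!: continuous_intros)

lemma open_cutoff_nonneg: "0 \<le> open_cutoff n U x"
  by (simp add: open_cutoff_def infdist_nonneg)

lemma open_cutoff_le_1: "open_cutoff n U x \<le> 1"
  by (simp add: open_cutoff_def)

lemma open_cutoff_tendsto:
  assumes "open U"
  shows "(\<lambda>n. open_cutoff n U x) \<longlonglongrightarrow> indicator U x"
proof (cases "x \<in> U \<and> U \<noteq> UNIV")
  case False
  then have "open_cutoff n U x = indicator U x" for n
    by (auto simp: open_cutoff_def)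
  then show ?thesis by simp
next
  case True
  then have d: "infdist x (- U) > 0"
    using assms by (intro infdist_pos_not_in_closed) auto
  obtain n0 :: nat where "1 / infdist x (- U) < n0" using reals_Archimedean2 by blast
  then have n0: "1 < real n0 * infdist x (- U)" using d by (simp add: field_simps)
  have "open_cutoff n U x = 1" if "n0 \<le> n" for n
  proof -
    have "real n0 * infdist x (- U) \<le> real n * infdist x (- U)"
      using that d by (intro mult_right_mono) auto
    then show ?thesis using n0 True by (simp add: open_cutoff_def)
  qed
  then have "\<forall>\<^sub>F n in sequentially. open_cutoff n U x = 1" by (auto simp: eventually_sequentially)
  then show ?thesis using True by (simp add: tendsto_eventually)
qed

lemma prod_indicator_eq:
  assumes "finite J"
  shows "(\<Prod>s\<in>J. indicator (U s) (\<rho> s) :: real) = indicator {\<rho>. \<forall>s\<in>J. \<rho> s \<in> U s} \<rho>"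
proof (cases "\<forall>s\<in>J. \<rho> s \<in> U s")
  case False
  then obtain s where s: "s \<in> J" "\<rho> s \<notin> U s" by blast
  then have "\<exists>s\<in>J. indicator (U s) (\<rho> s) = (0 :: real)" by (intro bexI[OF _ s(1)]) simp
  then show ?thesis using assms False by (simp add: prod_zero_iff)
qed simp

lemma (in Uhat_prob) integral_prod_indicator:
  assumes "finite J"
  shows "(\<integral>\<rho>. (\<Prod>s\<in>J. indicator (U s) (\<rho> s)) \<partial>M) = measure M (coord_box J U)"
proof -
  have "{\<rho>. \<forall>s\<in>J. \<rho> s \<in> U s} \<inter> space M = coord_box J U"
    by (auto simp: space_M coord_box_def)
  then show ?thesis by (simp add: prod_indicator_eq[OF assms])
qed

lemma measure_coord_box_eq:
  assumes MN: "Uhat_prob M" "Uhat_prob N" "\<forall>s\<in>Ucl. (\<integral>\<rho>. \<rho> s \<partial>M) = (\<integral>\<rho>. \<rho> s \<partial>N)"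
    and J: "finite J" "J \<subseteq> Ucl" and U: "\<And>s. s \<in> J \<Longrightarrow> open (U s)"
  shows "measure M (coord_box J U) = measure N (coord_box J U)"
proof -
  have lim: "(\<lambda>n. \<integral>\<rho>. (\<Prod>s\<in>J. open_cutoff n (U s) (\<rho> s)) \<partial>K) \<longlonglongrightarrow> measure K (coord_box J U)"
    if "Uhat_prob K" for K
    unfolding Uhat_prob.integral_prod_indicator[OF that J(1), symmetric]
    using J U open_cutoff_nonneg open_cutoff_le_1
    by (intro Uhat_prob.integral_prod_tendsto[OF that] borel_measurable_continuous_onI
        continuous_open_cutoff open_cutoff_tendsto borel_measurable_indicator borel_open)
       (auto simp: abs_le_iff intro: order_trans[OF _ open_cutoff_nonneg])
  have "(\<integral>\<rho>. (\<Prod>s\<in>J. open_cutoff n (U s) (\<rho> s)) \<partial>N)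
      = (\<integral>\<rho>. (\<Prod>s\<in>J. open_cutoff n (U s) (\<rho> s)) \<partial>M)" for n
    using J open_cutoff_nonneg open_cutoff_le_1
    by (intro integral_prod_continuous_eq[OF MN(2,1)] continuous_open_cutoff)
       (auto simp: MN(3) abs_le_iff intro: order_trans[OF _ open_cutoff_nonneg])
  with lim[OF MN(2)] have "(\<lambda>n. \<integral>\<rho>. (\<Prod>s\<in>J. open_cutoff n (U s) (\<rho> s)) \<partial>M)
      \<longlonglongrightarrow> measure N (coord_box J U)" by simp
  with lim[OF MN(1)] show ?thesis by (rule LIMSEQ_unique)
qed

lemma Uhat_prob_eqI:
  assumes MN: "Uhat_prob M" "Uhat_prob N" "\<forall>s\<in>Ucl. (\<integral>\<rho>. \<rho> s \<partial>M) = (\<integral>\<rho>. \<rho> s \<partial>N)"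
  shows "M = N"
proof (rule measure_eqI_generator_eq[OF Int_stable_coord_boxes coord_boxes_subset_Pow])
  show "sets M = sigma_sets Uhat coord_boxes" "sets N = sigma_sets Uhat coord_boxes"
    using MN(1,2) by (simp_all add: Uhat_prob.sets_M sets_borel_Uhat)
  fix B assume "B \<in> coord_boxes"
  then obtain J U where "B = coord_box J U" "finite J" "J \<subseteq> Ucl" "\<forall>s\<in>J. open (U s)"
    by (auto simp: coord_boxes_def)
  then show "emeasure M B = emeasure N B"
    using measure_coord_box_eq[OF MN]
    by (simp add: finite_measure.emeasure_eq_measure[OF prob_space.finite_measure[OF Uhat_prob.prob_space_M[OF MN(1)]]] finite_measure.emeasure_eq_measure[OF prob_space.finite_measure[OF Uhat_prob.prob_space_M[OF MN(2)]]])
next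
  show "range (\<lambda>_. Uhat) \<subseteq> coord_boxes" "(\<Union>i::nat. Uhat) = Uhat"
    using Uhat_in_coord_boxes by auto
  show "emeasure M Uhat \<noteq> \<infinity>"
    by (simp add: finite_measure.emeasure_eq_measure[OF prob_space.finite_measure[OF Uhat_prob.prob_space_M[OF MN(1)]]])
qed

definition class_rep :: "graph_class \<Rightarrow> nat set \<times> nat set set" where
  "class_rep s = (SOME F. F \<in> fgraphs \<and> s = iso_class F)"

lemma class_rep:
  assumes "s \<in> Ucl"
  shows "class_rep s \<in> fgraphs \<and> s = iso_class (class_rep s)"
proof -
  obtain F where "F \<in> fgraphs \<and> s = iso_class F" using UclE[OF assms] by blast
  then show ?thesis unfolding class_rep_def by (rule someI)
qed

lemma iso_rel_class_rep: "F \<in> fgraphs \<Longrightarrow> (F, class_rep (iso_class F)) \<in> iso_rel"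
  using class_rep[OF iso_class_in_Ucl] iso_class_eq_iff by metis

definition class_density :: "graph_class \<Rightarrow> nat \<Rightarrow> nat set set \<Rightarrow> real" where
  "class_density s j G = copy_density (16 ^ j) (class_rep s) G"

lemma class_density_iso_class: "F \<in> fgraphs \<Longrightarrow> class_density (iso_class F) j G = copy_density (16 ^ j) F G"
  unfolding class_density_def by (metis copy_density_iso iso_rel_class_rep)

lemma tendsto_class_density_uplus:
  assumes st: "s \<in> Ucl" "t \<in> Ucl"
    and lim: "(\<lambda>j. class_density s j G) \<longlonglongrightarrow> a" "(\<lambda>j. class_density t j G) \<longlonglongrightarrow> b"
  shows "(\<lambda>j. class_density (uplus s t) j G) \<longlonglongrightarrow> a * b"
proof -
  obtain V E W D where VE: "(V, E) \<in> fgraphs" and WD: "(W, D) \<in> fgraphs" and disj: "V \<inter> W = {}"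
    and s: "s = iso_class (V, E)" and t: "t = iso_class (W, D)"
    using st by (rule Ucl_disjoint_representatives)
  have u: "uplus s t = iso_class (V \<union> W, E \<union> D)"
    using uplus_iso_class[OF VE WD] disj s t by simp
  have cs: "class_density s j G = copy_density (16 ^ j) (V, E) G" for j
    using class_density_iso_class[OF VE] s by simp
  have ct: "class_density t j G = copy_density (16 ^ j) (W, D) G" for j
    using class_density_iso_class[OF WD] t by simp
  have cu: "class_density (uplus s t) j G = copy_density (16 ^ j) (V \<union> W, E \<union> D) G" for j
    using class_density_iso_class[OF fgraphs_Un[OF VE WD]] u by simp
  define c where "c = 2 * real (card V) * real (card W)"
  have "\<forall>\<^sub>F j in sequentially.
      norm (class_density s j G * class_density t j G - class_density (uplus s t) j G) \<le> c * (1 / 16) ^ j"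
  proof (rule eventually_sequentiallyI)
    fix j :: nat assume "card V + card W \<le> j"
    moreover have "j < 16 ^ j" by (induction j) auto
    ultimately have "card V + card W \<le> 16 ^ j" by linarith
    from copy_density_disjoint_Un[OF VE WD disj this, of G]
    show "norm (class_density s j G * class_density t j G - class_density (uplus s t) j G)
        \<le> c * (1 / 16) ^ j"
      by (simp add: cs ct cu c_def power_one_over)
  qed
  moreover have "(\<lambda>j. c * (1 / 16 :: real) ^ j) \<longlonglongrightarrow> 0"
    by (intro tendsto_mult_right_zero LIMSEQ_power_zero) auto
  ultimately have "(\<lambda>j. class_density s j G * class_density t j G - class_density (uplus s t) j G) \<longlonglongrightarrow> 0"
    by (rule Lim_null_comparison)
  then have "(\<lambda>j. class_density s j G * class_density t j G
      - (class_density s j G * class_density t j G - class_density (uplus s t) j G)) \<longlonglongrightarrow> a * b - 0"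
    by (intro tendsto_diff tendsto_mult lim)
  then show ?thesis by simp
qed

text \<open>Off the null set where some density fails to converge, the limit is the trivial character.\<close>

definition limit_character :: "nat set set \<Rightarrow> graph_class \<Rightarrow> real" where
  "limit_character G =
     (if \<forall>s\<in>Ucl. convergent (\<lambda>j. class_density s j G)
      then (\<lambda>s\<in>Ucl. lim (\<lambda>j. class_density s j G)) else (\<lambda>s\<in>Ucl. 1))"

lemma limit_character_in_Uhat: "limit_character G \<in> Uhat"
proof (cases "\<forall>s\<in>Ucl. convergent (\<lambda>j. class_density s j G)")
  case False
  then show ?thesis using const_1_in_Uhat by (auto simp: limit_character_def)
next
  case True
  define L where "L s = lim (\<lambda>j. class_density s j G)" for s
  have lim: "(\<lambda>j. class_density s j G) \<longlonglongrightarrow> L s" if "s \<in> Ucl" for s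
    using True that by (simp add: L_def convergent_LIMSEQ_iff)
  have "({}, {}) \<in> fgraphs" by (simp add: fgraphs_def)
  then have "class_density empty_class j G = 1" for j
    unfolding empty_class_def by (simp add: class_density_iso_class copy_density_empty)
  then have "L empty_class = 1"
    using lim[OF empty_class_in_Ucl] by (simp add: LIMSEQ_const_iff)
  moreover have "L (uplus s t) = L s * L t" if "s \<in> Ucl" "t \<in> Ucl" for s t
    using LIMSEQ_unique[OF lim[OF uplus_in_Ucl[OF that]]
        tendsto_class_density_uplus[OF that lim[OF that(1)] lim[OF that(2)]]] .
  moreover have "\<bar>L s\<bar> \<le> 1" if "s \<in> Ucl" for s
    using LIMSEQ_le_const[OF lim[OF that]] LIMSEQ_le_const2[OF lim[OF that]]
    by (simp add: class_density_def copy_density_nonneg copy_density_le_1)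
  ultimately show ?thesis using True empty_class_in_Ucl uplus_in_Ucl
    by (auto simp: limit_character_def L_def Uhat_def is_character_def intro!: exI[of _ 1])
qed

context random_graph
begin

lemma exchangeable_if_mobius_param_iso:
  assumes "\<And>F F'. (F, F') \<in> iso_rel \<Longrightarrow> mobius_param P F = mobius_param P F'"
  shows "exchangeable P"
proof (rule exchangeable_if_contain_prob_relabel)
  fix n \<sigma> E assume \<sigma>: "\<sigma> permutes {0..<n}" and E: "E \<in> Ln n"
  then have "(({0..<n}, E), ({0..<n}, relabel \<sigma> E)) \<in> iso_rel"
    using relabel_in_Ln[OF \<sigma> E] permutes_imp_bij[OF \<sigma>] by (intro iso_relI) (auto simp: Ln_def fgraphs_def)
  from assms[OF this] show "contain_prob (relabel \<sigma> E) = contain_prob E"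
    by (simp add: mobius_param_eq)
qed

end

locale exchangeable_random_graph = random_graph +
  assumes exchangeable_P: "exchangeable P"
begin

lemma borel_measurable_class_density: "s \<in> Ucl \<Longrightarrow> (\<lambda>G. class_density s j G) \<in> borel_measurable P"
  unfolding class_density_def using class_rep borel_measurable_copy_density by (metis prod.collapse)

lemma AE_convergent_class_density: "AE G in P. \<forall>s\<in>Ucl. convergent (\<lambda>j. class_density s j G)"
proof (rule AE_ball_countable'[OF _ countable_Ucl])
  fix s assume "s \<in> Ucl"
  then obtain V E where "class_rep s = (V, E)" "(V, E) \<in> fgraphs" using class_rep by (metis prod.collapse)
  then show "AE G in P. convergent (\<lambda>j. class_density s j G)"
    using AE_convergent_copy_density[OF exchangeable_P] by (simp add: class_density_def)
qed

lemma measurable_limit_character: "limit_character \<in> measurable P (borel_of Uhat_top)"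
proof (rule measurable_into_Uhat)
  show "limit_character \<in> space P \<rightarrow> Uhat" using limit_character_in_Uhat by blast
  fix s assume s: "s \<in> Ucl"
  have conv: "{G \<in> space P. \<forall>s\<in>Ucl. convergent (\<lambda>j. class_density s j G)} \<in> sets P"
  proof (rule sets.sets_Collect_countable_All'[OF _ countable_Ucl])
    fix s assume "s \<in> Ucl"
    then have "{G \<in> space P. Cauchy (\<lambda>j. class_density s j G)} \<in> sets P"
      using sets_Collect_Cauchy[of "\<lambda>j G. class_density s j G" P] borel_measurable_class_density
      by simp
    then show "{G \<in> space P. convergent (\<lambda>j. class_density s j G)} \<in> sets P"
      by (simp add: Cauchy_convergent_iff)
  qed
  have "(\<lambda>G. limit_character G s) = (\<lambda>G. if \<forall>s\<in>Ucl. convergent (\<lambda>j. class_density s j G)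
      then lim (\<lambda>j. class_density s j G) else 1)"
    using s by (auto simp: limit_character_def)
  also have "\<dots> \<in> borel_measurable P"
    using borel_measurable_class_density[OF s]
    by (intro measurable_If[OF _ _ conv] borel_measurable_lim_metric) auto
  finally show "(\<lambda>G. limit_character G s) \<in> borel_measurable P" .
qed

definition limit_measure :: "(graph_class \<Rightarrow> real) measure" where
  "limit_measure = distr P (borel_of Uhat_top) limit_character"

lemma Uhat_prob_limit_measure: "Uhat_prob limit_measure"
  unfolding Uhat_prob_def limit_measure_def
  using prob_space_distr[OF measurable_limit_character] by simp

lemma mobius_param_eq_integral:
  assumes F: "F \<in> fgraphs"
  shows "mobius_param P F = (\<integral>\<rho>. \<rho> (iso_class F) \<partial>limit_measure)"
proof -
  obtain V E where VE: "F = (V, E)" by fastforce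
  define s where "s = iso_class F"
  have s: "s \<in> Ucl" using iso_class_in_Ucl[OF F] by (simp add: s_def)
  have "(\<integral>\<rho>. \<rho> s \<partial>limit_measure) = (\<integral>G. limit_character G s \<partial>P)"
    unfolding limit_measure_def by (rule integral_distr[OF measurable_limit_character borel_measurable_coord[OF s]])
  moreover have "(\<lambda>j. \<integral>G. class_density s j G \<partial>P) \<longlonglongrightarrow> (\<integral>G. limit_character G s \<partial>P)"
  proof (rule integral_dominated_convergence[where w = "\<lambda>_. 1"])
    show "(\<lambda>G. limit_character G s) \<in> borel_measurable P"
      using measurable_comp[OF measurable_limit_character borel_measurable_coord[OF s]] by (simp add: comp_def)
    show "(\<lambda>G. class_density s j G) \<in> borel_measurable P" for j by (rule borel_measurable_class_density[OF s])
    show "AE G in P. (\<lambda>j. class_density s j G) \<longlonglongrightarrow> limit_character G s"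
      using AE_convergent_class_density
      by eventually_elim (use s in \<open>auto simp: limit_character_def convergent_LIMSEQ_iff\<close>)
    show "AE G in P. norm (class_density s j G) \<le> 1" for j
      by (simp add: class_density_def copy_density_nonneg copy_density_le_1)
  qed simp
  moreover have "(\<integral>G. class_density s j G \<partial>P) = mobius_param P F" if "card V \<le> j" for j
  proof -
    have "j < 16 ^ j" by (induction j) auto
    moreover have "class_density s j = copy_density (16 ^ j) F"
      by (rule ext) (simp add: s_def class_density_iso_class[OF F])
    ultimately show ?thesis
      using that integral_copy_density[OF exchangeable_P F[unfolded VE], of "16 ^ j"]
      by (simp add: mobius_param_eq VE)
  qed
  then have "(\<lambda>j. \<integral>G. class_density s j G \<partial>P) \<longlonglongrightarrow> mobius_param P F"
    by (intro tendsto_eventually eventually_sequentiallyI[of "card V"]) simp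
  ultimately show ?thesis using LIMSEQ_unique s_def by metis
qed

end

theorem corollary1:
  fixes P :: "nat set set measure"
  assumes "prob_space P" and "sets P = sets Linf_M"
  shows "exchangeable P \<longleftrightarrow>
    (\<exists>!\<mu>. prob_space \<mu> \<and> sets \<mu> = sets (borel_of Uhat_top) \<and>
       (\<forall>F \<in> fgraphs. mobius_param P F = (\<integral>\<rho>. \<rho> (iso_class F) \<partial>\<mu>)))"
proof -
  interpret random_graph P using assms by (rule random_graph.intro)
  show ?thesis
  proof
    assume "exchangeable P"
    then interpret exchangeable_random_graph P
      by (intro exchangeable_random_graph.intro exchangeable_random_graph_axioms.intro random_graph_axioms)
    show "\<exists>!\<mu>. prob_space \<mu> \<and> sets \<mu> = sets (borel_of Uhat_top) \<and>
        (\<forall>F \<in> fgraphs. mobius_param P F = (\<integral>\<rho>. \<rho> (iso_class F) \<partial>\<mu>))"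
    proof (rule ex1I[of _ limit_measure])
      show "prob_space limit_measure \<and> sets limit_measure = sets (borel_of Uhat_top) \<and>
          (\<forall>F \<in> fgraphs. mobius_param P F = (\<integral>\<rho>. \<rho> (iso_class F) \<partial>limit_measure))"
        using Uhat_prob_limit_measure mobius_param_eq_integral by (simp add: Uhat_prob_def)
    next
      fix \<mu> assume \<mu>: "prob_space \<mu> \<and> sets \<mu> = sets (borel_of Uhat_top) \<and>
          (\<forall>F \<in> fgraphs. mobius_param P F = (\<integral>\<rho>. \<rho> (iso_class F) \<partial>\<mu>))"
      show "\<mu> = limit_measure"
      proof (rule Uhat_prob_eqI)
        show "Uhat_prob \<mu>" using \<mu> by (simp add: Uhat_prob_def)
        show "Uhat_prob limit_measure" by (rule Uhat_prob_limit_measure)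
        show "\<forall>s\<in>Ucl. (\<integral>\<rho>. \<rho> s \<partial>\<mu>) = (\<integral>\<rho>. \<rho> s \<partial>limit_measure)"
          using \<mu> mobius_param_eq_integral by (auto elim!: UclE)
      qed
    qed
  next
    assume "\<exists>!\<mu>. prob_space \<mu> \<and> sets \<mu> = sets (borel_of Uhat_top) \<and>
        (\<forall>F \<in> fgraphs. mobius_param P F = (\<integral>\<rho>. \<rho> (iso_class F) \<partial>\<mu>))"
    then obtain \<mu> where \<mu>: "\<forall>F \<in> fgraphs. mobius_param P F = (\<integral>\<rho>. \<rho> (iso_class F) \<partial>\<mu>)"
      by blast
    show "exchangeable P"
    proof (rule exchangeable_if_mobius_param_iso)
      fix F F' assume "(F, F') \<in> iso_rel"
      then show "mobius_param P F = mobius_param P F'"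
        using \<mu> iso_class_eq[of F F'] iso_rel_fgraphs by auto
    qed
  qed
qed

end
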